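(* Let $n=\Theta(\lambda)$ and $m=\omega(\log n)$. For $i\in[m]$ let $\mathcal{P}_i$ be any shift-invariant and 2-wise independent distribution over $\mathbb{F}_2[X_{i,1},\dots,X_{i,n}]$. For every constant $\varepsilon\in(0,\tfrac16)$ and every constant $\alpha$ with $\tfrac78+\tfrac34\varepsilon<\alpha<1$, with probability $1-\mathrm{negl}(n)$ over $\mathcal{P}=(p_1,\dots,p_m)$ with $p_i\sim\mathcal{P}_i$ independently, there exists a negligible function $\mu$ such that for all sufficiently large $\lambda$, $$\sum_{(\mathbf{x},\mathbf{e})\in\mathsf{BAD}}\big|\hat V(\mathbf{x})\hat W^{\mathcal{P}}(\mathbf{e})\big|^2=\sum_{\mathbf{e}\in\mathcal{B}}\big|\hat W^{\mathcal{P}}(\mathbf{e})\big|^2\le\mu(\lambda).$$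
   Context: Elements of $\mathbb{F}_{2^n}$ are identified with $\mathbb{F}_2^n$ via a fixed basis; $\mathrm{Tr}:\mathbb{F}_{2^n}\to\mathbb{F}_2$ is the absolute trace and for $\mathbf{e},\mathbf{y}\in\mathbb{F}_{2^n}^m$, $\mathbf{e}\cdot\mathbf{y}=\sum_j e_jy_j$. $C^\perp$ is a Reed–Solomon code over $\mathbb{F}_{2^n}$ with parameters $(m,\boldsymbol\gamma,(1-\alpha)m)$, i.e. $\{(f(\gamma_1),\dots,f(\gamma_m)):\deg f<(1-\alpha)m\}$ for distinct $\gamma_j$. $\mathsf{Decode}(\mathbf{z})$: run the Guruswami–Sudan list decoder for $C^\perp$, returning all codewords at Hamming distance (over $\mathbb{F}_{2^n}$) at most $m-\sqrt{(1-\alpha)m\cdot m}$ from $\mathbf{z}$; if exactly one listed $\mathbf{x}$ satisfies $\mathrm{hw}(\mathbf{z}-\mathbf{x})\le(\tfrac12+\varepsilon)m$, output it, else output $\mathbf{0}$. $\mathcal{B}=\{\mathbf{e}\in\mathbb{F}_{2^n}^m:\exists\mathbf{x}\in C^\perp,\ \mathsf{Decode}(\mathbf{x}+\mathbf{e})\neq\mathbf{x}\}$, and $\mathsf{BAD}=((\mathbb{F}_{2^n}^m\setminus C^\perp)\times\mathbb{F}_{2^n}^m)\cup(C^\perp\times\mathcal{B})$. $\hat V(\mathbf{x})=|C^\perp|^{-1/2}$ if $\mathbf{x}\in C^\perp$ and $0$ otherwise. With $\mathcal{R}_i=\{\mathbf{e}\in\mathbb{F}_2^n:p_i(\mathbf{e})=0\}$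 and $\mathcal{R}=\mathcal{R}_1\times\cdots\times\mathcal{R}_m$, $W^{\mathcal{P}}(\mathbf{e})=|\mathcal{R}|^{-1/2}$ if $\mathbf{e}\in\mathcal{R}$ and $0$ otherwise, and $\hat W^{\mathcal{P}}(\mathbf{e})=2^{-nm/2}\sum_{\mathbf{y}\in\mathbb{F}_{2^n}^m}W^{\mathcal{P}}(\mathbf{y})(-1)^{\mathrm{Tr}(\mathbf{e}\cdot\mathbf{y})}$. Shift-invariant: for every $\mathbf{s}$, $p(\mathbf{X}+\mathbf{s})$ with $p\sim\mathcal{P}_i$ has the same distribution as $p$. 2-wise independent: for distinct $\mathbf{x}_1,\mathbf{x}_2\in\mathbb{F}_2^n$ and $a_1,a_2\in\mathbb{F}_2$, $\Pr[p(\mathbf{x}_1)=a_1\wedge p(\mathbf{x}_2)=a_2]=\tfrac14$. *)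

theory Defs
  imports "HOL-Algebra.Ring" "HOL-Algebra.FiniteProduct" "HOL-Probability.Product_PMF" "HOL-Library.Landau_Symbols"
begin

definition negligible_fun :: "(nat \<Rightarrow> real) \<Rightarrow> bool" where
  "negligible_fun f \<longleftrightarrow> (\<forall>c::nat. \<forall>\<^sub>F x in sequentially. \<bar>f x\<bar> < inverse (real x ^ c))"

definition bitvecs :: "nat \<Rightarrow> bool list set" where
  "bitvecs n = {v. length v = n}"

definition bvadd :: "bool list \<Rightarrow> bool list \<Rightarrow> bool list" where
  "bvadd u v = map2 (\<noteq>) u v"

text \<open>A polynomial in F_2[X_1..X_n] is represented by its evaluation map F_2^n -> F_2
  (only evaluations enter the statement). A distribution over such polynomials is a pmf
  over functions; only their restriction to bitvecs n is meaningful.\<close>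

definition shift_invariant :: "nat \<Rightarrow> (bool list \<Rightarrow> bool) pmf \<Rightarrow> bool" where
  "shift_invariant n D \<longleftrightarrow>
     (\<forall>s\<in>bitvecs n. map_pmf (\<lambda>p. restrict (\<lambda>x. p (bvadd x s)) (bitvecs n)) D
                   = map_pmf (\<lambda>p. restrict p (bitvecs n)) D)"

definition two_wise_independent :: "nat \<Rightarrow> (bool list \<Rightarrow> bool) pmf \<Rightarrow> bool" where
  "two_wise_independent n D \<longleftrightarrow>
     (\<forall>x1\<in>bitvecs n. \<forall>x2\<in>bitvecs n. \<forall>a1 a2. x1 \<noteq> x2 \<longrightarrow>
        measure_pmf.prob D {p. p x1 = a1 \<and> p x2 = a2} = 1/4)"

text \<open>F is a field with 2^n elements; phi is the coordinate map w.r.t. a fixed F_2-basis,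
  i.e. an additive bijection from the carrier onto F_2^n.\<close>

definition field_with_basis :: "('a, 'b) ring_scheme \<Rightarrow> nat \<Rightarrow> ('a \<Rightarrow> bool list) \<Rightarrow> bool" where
  "field_with_basis F n phi \<longleftrightarrow>
     field F \<and> finite (carrier F) \<and> card (carrier F) = 2 ^ n \<and>
     bij_betw phi (carrier F) (bitvecs n) \<and>
     (\<forall>x\<in>carrier F. \<forall>y\<in>carrier F. phi (x \<oplus>\<^bsub>F\<^esub> y) = bvadd (phi x) (phi y))"

definition trace :: "('a, 'b) ring_scheme \<Rightarrow> nat \<Rightarrow> 'a \<Rightarrow> 'a" where
  "trace F n x = finsum F (\<lambda>i. x [^]\<^bsub>F\<^esub> ((2::nat) ^ i)) {..<n}"

definition fvecs :: "('a, 'b) ring_scheme \<Rightarrow> nat \<Rightarrow> (nat \<Rightarrow> 'a) set" where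
  "fvecs F m = {..<m} \<rightarrow>\<^sub>E carrier F"

definition vadd :: "('a, 'b) ring_scheme \<Rightarrow> nat \<Rightarrow> (nat \<Rightarrow> 'a) \<Rightarrow> (nat \<Rightarrow> 'a) \<Rightarrow> nat \<Rightarrow> 'a" where
  "vadd F m x y = (\<lambda>j\<in>{..<m}. x j \<oplus>\<^bsub>F\<^esub> y j)"

definition vsub :: "('a, 'b) ring_scheme \<Rightarrow> nat \<Rightarrow> (nat \<Rightarrow> 'a) \<Rightarrow> (nat \<Rightarrow> 'a) \<Rightarrow> nat \<Rightarrow> 'a" where
  "vsub F m x y = (\<lambda>j\<in>{..<m}. x j \<ominus>\<^bsub>F\<^esub> y j)"

definition vzero :: "('a, 'b) ring_scheme \<Rightarrow> nat \<Rightarrow> nat \<Rightarrow> 'a" where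
  "vzero F m = (\<lambda>j\<in>{..<m}. \<zero>\<^bsub>F\<^esub>)"

definition vdot :: "('a, 'b) ring_scheme \<Rightarrow> nat \<Rightarrow> (nat \<Rightarrow> 'a) \<Rightarrow> (nat \<Rightarrow> 'a) \<Rightarrow> 'a" where
  "vdot F m e y = finsum F (\<lambda>j. e j \<otimes>\<^bsub>F\<^esub> y j) {..<m}"

definition hw :: "('a, 'b) ring_scheme \<Rightarrow> nat \<Rightarrow> (nat \<Rightarrow> 'a) \<Rightarrow> nat" where
  "hw F m v = card {j\<in>{..<m}. v j \<noteq> \<zero>\<^bsub>F\<^esub>}"

definition hdist :: "('a, 'b) ring_scheme \<Rightarrow> nat \<Rightarrow> (nat \<Rightarrow> 'a) \<Rightarrow> (nat \<Rightarrow> 'a) \<Rightarrow> nat" where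
  "hdist F m x y = hw F m (vsub F m x y)"

definition RS_code :: "('a, 'b) ring_scheme \<Rightarrow> nat \<Rightarrow> (nat \<Rightarrow> 'a) \<Rightarrow> real \<Rightarrow> (nat \<Rightarrow> 'a) set" where
  "RS_code F m gamma k =
     {(\<lambda>j\<in>{..<m}. finsum F (\<lambda>i. c i \<otimes>\<^bsub>F\<^esub> (gamma j [^]\<^bsub>F\<^esub> i)) {i. real i < k})
      | c. c \<in> {i. real i < k} \<rightarrow>\<^sub>E carrier F}"

text \<open>The Guruswami--Sudan list decoder is modelled by its specification: it returns
  exactly the codewords within Hamming distance m - sqrt((1-alpha) m * m).\<close>

definition GS_list :: "('a, 'b) ring_scheme \<Rightarrow> nat \<Rightarrow> (nat \<Rightarrow> 'a) \<Rightarrow> real \<Rightarrow> (nat \<Rightarrow> 'a) \<Rightarrow> (nat \<Rightarrow> 'a) set" where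
  "GS_list F m gamma \<alpha> z =
     {x \<in> RS_code F m gamma ((1 - \<alpha>) * real m).
        real (hdist F m z x) \<le> real m - sqrt ((1 - \<alpha>) * real m * real m)}"

definition Decode :: "('a, 'b) ring_scheme \<Rightarrow> nat \<Rightarrow> (nat \<Rightarrow> 'a) \<Rightarrow> real \<Rightarrow> real \<Rightarrow> (nat \<Rightarrow> 'a) \<Rightarrow> nat \<Rightarrow> 'a" where
  "Decode F m gamma \<alpha> \<epsilon> z =
     (let Cand = {x \<in> GS_list F m gamma \<alpha> z. real (hw F m (vsub F m z x)) \<le> (1/2 + \<epsilon>) * real m}
      in if (\<exists>!x. x \<in> Cand) then (THE x. x \<in> Cand) else vzero F m)"

definition bad_errors :: "('a, 'b) ring_scheme \<Rightarrow> nat \<Rightarrow> (nat \<Rightarrow> 'a) \<Rightarrow> real \<Rightarrow> real \<Rightarrow> (nat \<Rightarrow> 'a) set" where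
  "bad_errors F m gamma \<alpha> \<epsilon> =
     {e \<in> fvecs F m. \<exists>x\<in>RS_code F m gamma ((1 - \<alpha>) * real m).
        Decode F m gamma \<alpha> \<epsilon> (vadd F m x e) \<noteq> x}"

definition BAD :: "('a, 'b) ring_scheme \<Rightarrow> nat \<Rightarrow> (nat \<Rightarrow> 'a) \<Rightarrow> real \<Rightarrow> real \<Rightarrow> ((nat \<Rightarrow> 'a) \<times> (nat \<Rightarrow> 'a)) set" where
  "BAD F m gamma \<alpha> \<epsilon> =
     ((fvecs F m - RS_code F m gamma ((1 - \<alpha>) * real m)) \<times> fvecs F m)
     \<union> (RS_code F m gamma ((1 - \<alpha>) * real m) \<times> bad_errors F m gamma \<alpha> \<epsilon>)"

definition Vhat :: "('a, 'b) ring_scheme \<Rightarrow> nat \<Rightarrow> (nat \<Rightarrow> 'a) \<Rightarrow> real \<Rightarrow> (nat \<Rightarrow> 'a) \<Rightarrow> real" where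
  "Vhat F m gamma \<alpha> x =
     (if x \<in> RS_code F m gamma ((1 - \<alpha>) * real m)
      then 1 / sqrt (real (card (RS_code F m gamma ((1 - \<alpha>) * real m)))) else 0)"

definition Rset :: "nat \<Rightarrow> nat \<Rightarrow> (nat \<Rightarrow> bool list \<Rightarrow> bool) \<Rightarrow> (nat \<Rightarrow> bool list) set" where
  "Rset n m P = (\<Pi>\<^sub>E i\<in>{..<m}. {v \<in> bitvecs n. P i v = False})"

definition W :: "('a, 'b) ring_scheme \<Rightarrow> nat \<Rightarrow> nat \<Rightarrow> ('a \<Rightarrow> bool list) \<Rightarrow> (nat \<Rightarrow> bool list \<Rightarrow> bool) \<Rightarrow> (nat \<Rightarrow> 'a) \<Rightarrow> real" where
  "W F n m phi P y =
     (if (\<lambda>j\<in>{..<m}. phi (y j)) \<in> Rset n m P then 1 / sqrt (real (card (Rset n m P))) else 0)"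

definition What :: "('a, 'b) ring_scheme \<Rightarrow> nat \<Rightarrow> nat \<Rightarrow> ('a \<Rightarrow> bool list) \<Rightarrow> (nat \<Rightarrow> bool list \<Rightarrow> bool) \<Rightarrow> (nat \<Rightarrow> 'a) \<Rightarrow> real" where
  "What F n m phi P e =
     2 powr (- (real n * real m) / 2) *
     (\<Sum>y\<in>fvecs F m. W F n m phi P y *
         (if trace F n (vdot F m e y) = \<zero>\<^bsub>F\<^esub> then 1 else -1))"

end

(*
  Write q_j(a) for the squared Fourier coefficient at a of the unit-norm indicator function of
  the zero set Z_j of p_j in F_(2^n).  Then |What(e)|^2 is the product of the q_j(e_j), and for
  each j the weights q_j sum to 1 (Parseval).

  The decoder fails on an error pattern e only if e has more than t = (1/2 + eps) m nonzero
  entries, or e agrees with a nonzero Reed-Solomon codeword c in at least m - t positions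
  (otherwise the sent codeword would be the unique candidate).  Replacing the indicators of these
  events by x ^ (hw e - t) and (2^n) ^ (agree(e, c) - (m - t)) turns the bad weight into sums
  of products over the coordinates, which factorise.

  Pairwise independence of p_j gives E q_j(0) = 1/2 and E q_j(b) <= 5 / 2^n for b <> 0.  For
  x = (1 + 2 eps)^2 the expectation of the first term is at most rho^m with rho < 1; since a
  nonzero codeword has fewer than (1 - alpha) m zero coordinates, that of the second is at most
  2^(-m).  Markov's inequality bounds the bad weight by 2 tau^m outside probability tau^m, and
  both are negligible because m = omega(log n).
*)

theory Submission
  imports Defs "HOL-Algebra.Multiplicative_Group"
begin

section \<open>Finite fields of characteristic two and their trace\<close>

lemma (in domain) card_roots_finsum_le:
  assumes "finite (carrier R)" and c: "c \<in> {..d} \<rightarrow> carrier R" and "c d \<noteq> \<zero>"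
  shows "card {a \<in> carrier R. (\<Oplus>i\<in>{..d}. c i \<otimes> a [^] i) = \<zero>} \<le> d"
proof -
  interpret U: UP_domain R "UP R" by unfold_locales
  define f where "f = (\<lambda>i. if i \<le> d then c i else \<zero>)"
  have "f \<in> up R"
    by (rule mem_upI) (use c in \<open>auto simp: f_def Pi_def bound_def intro!: exI[of _ d]\<close>)
  then have f: "f \<in> carrier (UP R)" and coeff_f: "coeff (UP R) f = f"
    by (simp_all add: UP_def)
  have coeff_f_d: "coeff (UP R) f d \<noteq> \<zero>"
    unfolding coeff_f using assms(3) by (simp add: f_def)
  have deg_f: "deg R f = d"
  proof (rule antisym)
    show "deg R f \<le> d" by (rule U.deg_aboveI) (use f in \<open>simp_all add: coeff_f, simp add: f_def\<close>)
    show "d \<le> deg R f" by (rule U.deg_belowI) (use f coeff_f_d in simp_all)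
  qed
  have "f \<noteq> \<zero>\<^bsub>UP R\<^esub>"
    using coeff_f_d by auto
  then have "card {a \<in> carrier R. eval R R id a f = \<zero>} \<le> d"
    using U.roots_bound[OF f _ assms(1)] deg_f by simp
  moreover have "eval R R id a f = (\<Oplus>i\<in>{..d}. c i \<otimes> a [^] i)" if "a \<in> carrier R" for a
  proof -
    have "eval R R id a f = (\<Oplus>i\<in>{..d}. f i \<otimes> a [^] i)"
      using U.eval_on_carrier[OF f, of R id a] that by (simp add: coeff_f deg_f)
    also have "\<dots> = (\<Oplus>i\<in>{..d}. c i \<otimes> a [^] i)"
      using that c by (intro finsum_cong') (auto simp: f_def)
    finally show ?thesis .
  qed
  then have "{a \<in> carrier R. eval R R id a f = \<zero>} = {a \<in> carrier R. (\<Oplus>i\<in>{..d}. c i \<otimes> a [^] i) = \<zero>}"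
    by auto
  ultimately show ?thesis
    by simp
qed

lemma (in abelian_monoid) finsum_lessThan_Suc_shift:
  assumes "g \<in> UNIV \<rightarrow> carrier G"
  shows "(\<Oplus>i\<in>{..<Suc k}. g i) = g 0 \<oplus> (\<Oplus>i\<in>{..<k}. g (Suc i))"
proof -
  have "(\<Oplus>i\<in>{..<Suc k}. g i) = g 0 \<oplus> (\<Oplus>i\<in>Suc ` {..<k}. g i)"
    using assms by (simp add: lessThan_Suc_eq_insert_0 finsum_insert Pi_def)
  also have "(\<Oplus>i\<in>Suc ` {..<k}. g i) = (\<Oplus>i\<in>{..<k}. g (Suc i))"
    using assms by (subst finsum_reindex) (auto simp: Pi_def)
  finally show ?thesis .
qed

definition trace_char :: "('a, 'b) ring_scheme \<Rightarrow> nat \<Rightarrow> 'a \<Rightarrow> real" where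
  "trace_char F n z = (if trace F n z = \<zero>\<^bsub>F\<^esub> then 1 else -1)"

locale binary_field = field F for F (structure) +
  fixes n :: nat
  assumes finite_carrier: "finite (carrier F)"
    and card_carrier: "card (carrier F) = 2 ^ n"
    and add_self: "x \<in> carrier F \<Longrightarrow> x \<oplus> x = \<zero>"

lemma bvadd_self: "bvadd v v = replicate (length v) False"
  unfolding bvadd_def by (induct v) auto

lemma field_with_basis_binary_field:
  assumes "field_with_basis F n phi"
  shows "binary_field F n"
proof -
  interpret field F using assms by (simp add: field_with_basis_def)
  have bij: "bij_betw phi (carrier F) (bitvecs n)"
    and hom: "\<And>x y. x \<in> carrier F \<Longrightarrow> y \<in> carrier F \<Longrightarrow> phi (x \<oplus>\<^bsub>F\<^esub> y) = bvadd (phi x) (phi y)"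
    using assms by (auto simp: field_with_basis_def)
  have double: "phi (x \<oplus>\<^bsub>F\<^esub> x) = replicate n False" if "x \<in> carrier F" for x
    using that bij hom[OF that that] bvadd_self by (auto simp: bij_betw_def bitvecs_def)
  have "x \<oplus>\<^bsub>F\<^esub> x = \<zero>\<^bsub>F\<^esub>" if "x \<in> carrier F" for x
    using double[OF that] double[of "\<zero>\<^bsub>F\<^esub>"] that bij by (simp add: bij_betw_def inj_on_def)
  then show ?thesis
    using assms by unfold_locales (auto simp: field_with_basis_def)
qed

context binary_field
begin

lemma degree_ge_one: "n \<ge> 1"
proof -
  have "card {\<zero>, \<one>} \<le> card (carrier F)"
    using finite_carrier by (intro card_mono) auto
  then have "2 \<le> (2::nat) ^ n"
    using card_carrier by simp
  then show ?thesis
    by (cases n) auto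
qed

lemma minus_eq_add: "x \<in> carrier F \<Longrightarrow> y \<in> carrier F \<Longrightarrow> x \<ominus> y = x \<oplus> y"
  by (metis a_minus_def add.inv_closed add.inv_comm add.inv_equality add_self minus_minus)

lemma add_eq_zero_iff: "x \<in> carrier F \<Longrightarrow> y \<in> carrier F \<Longrightarrow> x \<oplus> y = \<zero> \<longleftrightarrow> x = y"
  by (metis add.inv_closed add.inv_equality add_self minus_eq_add a_minus_def)

lemma add_add_cancel_left: "x \<in> carrier F \<Longrightarrow> y \<in> carrier F \<Longrightarrow> x \<oplus> (x \<oplus> y) = y"
  by (simp add: a_assoc[symmetric] add_self)

lemma square_add:
  assumes "x \<in> carrier F" "y \<in> carrier F"
  shows "(x \<oplus> y) [^] (2::nat) = x [^] (2::nat) \<oplus> y [^] (2::nat)"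
proof -
  have "(x \<oplus> y) [^] (2::nat) = x \<otimes> x \<oplus> ((x \<otimes> y \<oplus> x \<otimes> y) \<oplus> y \<otimes> y)"
    using assms by (simp add: numeral_2_eq_2 l_distr r_distr a_ac m_comm)
  then show ?thesis
    using assms by (simp add: add_self numeral_2_eq_2)
qed

lemma square_finsum:
  assumes "f \<in> A \<rightarrow> carrier F"
  shows "(\<Oplus>i\<in>A. f i) [^] (2::nat) = (\<Oplus>i\<in>A. f i [^] (2::nat))"
  using assms
proof (induction A rule: infinite_finite_induct)
  case (insert a A)
  then show ?case by (simp add: square_add finsum_closed Pi_def)
qed (simp_all add: numeral_2_eq_2)

lemma pow_card_carrier: "x \<in> carrier F \<Longrightarrow> x [^] ((2::nat) ^ n) = x"
proof (cases "x = \<zero>")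
  case False
  assume x: "x \<in> carrier F"
  have "card (Units F) = 2 ^ n - 1"
    using finite_carrier card_carrier by (simp add: field_Units)
  then have "x [^] ((2::nat) ^ n - 1) = \<one>"
    using units_power_order_eq_one[of x] x False finite_carrier by (simp add: field_Units)
  then show ?thesis
    using x nat_pow_Suc[of x "2 ^ n - 1"] by simp
qed (simp add: nat_pow_zero)

lemma trace_closed: "x \<in> carrier F \<Longrightarrow> trace F n x \<in> carrier F"
  unfolding trace_def by (auto intro: finsum_closed)

lemma trace_zero: "trace F n \<zero> = \<zero>"
  by (simp add: trace_def nat_pow_zero)

lemma trace_add:
  assumes "x \<in> carrier F" "y \<in> carrier F"
  shows "trace F n (x \<oplus> y) = trace F n x \<oplus> trace F n y"
proof -
  have pow_Suc: "z [^] ((2::nat) * 2 ^ i) = (z [^] ((2::nat) ^ i)) [^] (2::nat)" if "z \<in> carrier F" for z i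
    using that by (simp add: nat_pow_pow mult.commute)
  have "(x \<oplus> y) [^] ((2::nat) ^ i) = x [^] ((2::nat) ^ i) \<oplus> y [^] ((2::nat) ^ i)" for i
  proof (induction i)
    case (Suc i)
    then show ?case
      using assms by (simp add: pow_Suc square_add)
  qed (use assms in simp)
  then show ?thesis
    using assms by (simp add: trace_def finsum_addf)
qed

lemma trace_idem: 
  assumes x: "x \<in> carrier F"
  shows "trace F n x \<otimes> trace F n x = trace F n x"
proof -
  define g where "g i = x [^] ((2::nat) ^ i)" for i
  have g: "g \<in> UNIV \<rightarrow> carrier F" using x by (simp add: g_def)
  have "trace F n x \<otimes> trace F n x = (trace F n x) [^] (2::nat)"
    using trace_closed[OF x] by (simp add: numeral_2_eq_2)
  also have "\<dots> = (\<Oplus>i\<in>{..<n}. g i [^] (2::nat))"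
    unfolding trace_def g_def[symmetric] by (rule square_finsum) (use g in auto)
  also have "\<dots> = (\<Oplus>i\<in>{..<n}. g (Suc i))"
    using x by (intro finsum_cong') (auto simp: g_def nat_pow_pow mult.commute)
  also have "\<dots> = trace F n x"
  proof -
    \<comment> \<open>both sums arise from the sum over \<open>i \<le> n\<close> by dropping one of the equal terms \<open>g 0 = g n = x\<close>\<close>
    have "x \<oplus> (\<Oplus>i\<in>{..<n}. g (Suc i)) = (\<Oplus>i\<in>{..<Suc n}. g i)"
      using g x by (simp add: g_def[of 0] finsum_lessThan_Suc_shift)
    also have "\<dots> = x \<oplus> trace F n x"
      using x pow_card_carrier[OF x] by (simp add: lessThan_Suc finsum_insert Pi_def trace_def g_def)
    finally have "x \<oplus> (x \<oplus> (\<Oplus>i\<in>{..<n}. g (Suc i))) = x \<oplus> (x \<oplus> trace F n x)"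
      by simp
    then show ?thesis
      using x trace_closed[OF x] g by (simp add: add_add_cancel_left finsum_closed Pi_def)
  qed
  finally show ?thesis .
qed

lemma trace_zero_or_one: "x \<in> carrier F \<Longrightarrow> trace F n x = \<zero> \<or> trace F n x = \<one>"
  using trace_idem[of x] trace_closed[of x] m_lcancel[of "trace F n x" "trace F n x" \<one>] by auto

lemma exists_trace_nonzero: "\<exists>b\<in>carrier F. trace F n b \<noteq> \<zero>"
proof (rule ccontr)
  assume "\<not> ?thesis"
  then have trace_vanishes: "\<And>b. b \<in> carrier F \<Longrightarrow> trace F n b = \<zero>" by auto
  \<comment> \<open>the trace is a polynomial of degree \<open>2 ^ (n - 1) < card (carrier F)\<close>, so it cannot vanish everywhere\<close>
  define d where "d = (2::nat) ^ (n - 1)"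
  define c where "c k = (if k \<in> (\<lambda>i. (2::nat) ^ i) ` {..<n} then \<one> else \<zero>)" for k
  have powers_le_d: "(\<lambda>i. (2::nat) ^ i) ` {..<n} \<subseteq> {..d}"
    using degree_ge_one by (auto simp: d_def)
  have "(\<Oplus>k\<in>{..d}. c k \<otimes> b [^] k) = trace F n b" if "b \<in> carrier F" for b
  proof -
    have "(\<Oplus>k\<in>{..d}. c k \<otimes> b [^] k) = (\<Oplus>k\<in>(\<lambda>i. (2::nat) ^ i) ` {..<n}. b [^] k)"
      by (rule add.finprod_mono_neutral_cong_right) (use powers_le_d that in \<open>auto simp: c_def\<close>)
    also have "\<dots> = trace F n b"
      unfolding trace_def using that by (subst finsum_reindex) (auto simp: inj_on_def)
    finally show ?thesis .
  qed
  then have "{b \<in> carrier F. (\<Oplus>k\<in>{..d}. c k \<otimes> b [^] k) = \<zero>} = carrier F"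
    using trace_vanishes by auto
  moreover have "c d \<noteq> \<zero>"
    using degree_ge_one by (auto simp: c_def d_def)
  ultimately have "card (carrier F) \<le> d"
    using card_roots_finsum_le[of c d] finite_carrier by (auto simp: c_def)
  moreover have "d < 2 ^ n"
    using degree_ge_one by (simp add: d_def)
  ultimately show False
    using card_carrier by simp
qed

lemma trace_char_add:
  assumes "x \<in> carrier F" "y \<in> carrier F"
  shows "trace_char F n (x \<oplus> y) = trace_char F n x * trace_char F n y"
  using trace_zero_or_one[OF assms(1)] trace_zero_or_one[OF assms(2)] trace_add[OF assms] add_self[of \<one>]
  by (auto simp: trace_char_def)

lemma trace_char_zero: "trace_char F n \<zero> = 1"
  by (simp add: trace_char_def trace_zero)

lemma trace_char_finsum:
  "f \<in> A \<rightarrow> carrier F \<Longrightarrow> trace_char F n (\<Oplus>i\<in>A. f i) = (\<Prod>i\<in>A. trace_char F n (f i))"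
proof (induction A rule: infinite_finite_induct)
  case (insert a A)
  then show ?case by (simp add: finsum_insert trace_char_add finsum_closed)
qed (simp_all add: trace_char_zero)

lemma sum_trace_char: "(\<Sum>a\<in>carrier F. trace_char F n a) = 0"
proof -
  obtain b where b: "b \<in> carrier F" "trace F n b \<noteq> \<zero>"
    using exists_trace_nonzero by blast
  have "(\<Sum>a\<in>carrier F. trace_char F n a) = (\<Sum>a\<in>carrier F. trace_char F n (a \<oplus> b))"
    by (rule sum.reindex_bij_witness[of _ "\<lambda>a. a \<oplus> b" "\<lambda>a. a \<oplus> b"])
       (use b in \<open>auto simp: a_assoc add_self\<close>)
  also have "\<dots> = - (\<Sum>a\<in>carrier F. trace_char F n a)"
    using b by (simp add: trace_char_add sum_negf[symmetric]) (simp add: trace_char_def)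
  finally show ?thesis by simp
qed

lemma sum_trace_char_mult:
  assumes "z \<in> carrier F"
  shows "(\<Sum>a\<in>carrier F. trace_char F n (a \<otimes> z)) = (if z = \<zero> then 2 ^ n else 0)"
proof (cases "z = \<zero>")
  case False
  then have z: "z \<in> Units F"
    using assms field_Units by auto
  have "(\<Sum>a\<in>carrier F. trace_char F n (a \<otimes> z)) = (\<Sum>a\<in>carrier F. trace_char F n a)"
    by (rule sum.reindex_bij_witness[of _ "\<lambda>a. a \<otimes> inv z" "\<lambda>a. a \<otimes> z"])
       (use z in \<open>auto simp: m_assoc Units_closed\<close>)
  then show ?thesis
    using sum_trace_char False by simp
qed (simp add: trace_char_zero card_carrier)

end

lemma abs_trace_char [simp]: "\<bar>trace_char F n z\<bar> = 1"
  by (simp add: trace_char_def)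

lemma trace_char_square: "trace_char F n z * trace_char F n z = 1"
  by (simp add: trace_char_def)

section \<open>Fourier weights of subsets\<close>

definition char_sum :: "('a, 'b) ring_scheme \<Rightarrow> nat \<Rightarrow> 'a set \<Rightarrow> 'a \<Rightarrow> real" where
  "char_sum F n Z a = (\<Sum>y\<in>Z. trace_char F n (a \<otimes>\<^bsub>F\<^esub> y))"

text \<open>The squared Fourier coefficient at \<open>a\<close> of the unit-norm indicator function of \<open>Z\<close>.\<close>

definition fourier_weight :: "('a, 'b) ring_scheme \<Rightarrow> nat \<Rightarrow> 'a set \<Rightarrow> 'a \<Rightarrow> real" where
  "fourier_weight F n Z a = (char_sum F n Z a)\<^sup>2 / (2 ^ n * real (card Z))"

lemma fourier_weight_nonneg: "fourier_weight F n Z a \<ge> 0"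
  by (simp add: fourier_weight_def)

lemma abs_char_sum_le: "\<bar>char_sum F n Z a\<bar> \<le> real (card Z)"
proof -
  have "\<bar>char_sum F n Z a\<bar> \<le> (\<Sum>y\<in>Z. \<bar>trace_char F n (a \<otimes>\<^bsub>F\<^esub> y)\<bar>)"
    unfolding char_sum_def by (rule sum_abs)
  then show ?thesis by simp
qed

lemma fourier_weight_le_card: "fourier_weight F n Z a \<le> real (card Z) / 2 ^ n"
proof (cases "card Z = 0")
  case False
  have "(char_sum F n Z a)\<^sup>2 \<le> (real (card Z))\<^sup>2"
    using power_mono[OF abs_char_sum_le abs_ge_zero, of F n Z a 2] by simp
  then have "fourier_weight F n Z a \<le> (real (card Z))\<^sup>2 / (2 ^ n * real (card Z))"
    unfolding fourier_weight_def by (intro divide_right_mono) auto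
  also have "\<dots> = real (card Z) / 2 ^ n"
    using False by (simp add: power2_eq_square)
  finally show ?thesis .
qed (simp add: fourier_weight_def)

context binary_field
begin

lemma fourier_weight_le_one:
  assumes "Z \<subseteq> carrier F"
  shows "fourier_weight F n Z a \<le> 1"
proof -
  have "card Z \<le> 2 ^ n"
    using card_mono[OF finite_carrier assms] card_carrier by simp
  then have "real (card Z) / 2 ^ n \<le> 1"
    by simp
  then show ?thesis
    using fourier_weight_le_card[of F n Z a] by linarith
qed

lemma fourier_weight_zero:
  assumes "Z \<subseteq> carrier F"
  shows "fourier_weight F n Z \<zero> = real (card Z) / 2 ^ n"
proof -
  have "char_sum F n Z \<zero> = real (card Z)"
    unfolding char_sum_def using assms by (simp add: trace_char_zero subset_iff)
  then show ?thesis
    by (cases "card Z = 0") (auto simp: fourier_weight_def power2_eq_square)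
qed

lemma sum_char_sum_square:
  assumes "Z \<subseteq> carrier F"
  shows "(\<Sum>a\<in>carrier F. (char_sum F n Z a)\<^sup>2) = 2 ^ n * real (card Z)"
proof -
  have fin: "finite Z"
    using assms finite_carrier finite_subset by blast
  have "(\<Sum>a\<in>carrier F. (char_sum F n Z a)\<^sup>2)
      = (\<Sum>a\<in>carrier F. \<Sum>y\<in>Z. \<Sum>y'\<in>Z. trace_char F n (a \<otimes> (y \<oplus> y')))"
    unfolding char_sum_def power2_eq_square sum_product
    using assms by (intro sum.cong refl) (auto simp: r_distr trace_char_add subset_iff)
  also have "\<dots> = (\<Sum>y\<in>Z. \<Sum>y'\<in>Z. \<Sum>a\<in>carrier F. trace_char F n (a \<otimes> (y \<oplus> y')))"
    by (simp add: sum.swap[of _ "carrier F"])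
  also have "\<dots> = (\<Sum>y\<in>Z. \<Sum>y'\<in>Z. if y = y' then 2 ^ n else 0)"
    using assms by (intro sum.cong refl) (auto simp: sum_trace_char_mult add_eq_zero_iff subset_iff)
  also have "\<dots> = 2 ^ n * real (card Z)"
    using fin by (simp add: sum.delta)
  finally show ?thesis .
qed

lemma sum_fourier_weight:
  assumes "Z \<subseteq> carrier F"
  shows "(\<Sum>a\<in>carrier F. fourier_weight F n Z a) = (if Z = {} then 0 else 1)"
proof -
  have "finite Z"
    using assms finite_carrier finite_subset by blast
  then show ?thesis
    using sum_char_sum_square[OF assms]
    by (auto simp: fourier_weight_def sum_divide_distrib[symmetric] card_gt_0_iff)
qed

end

section \<open>Zero sets and the factorisation of \<open>What\<close>\<close>

locale binary_field_with_basis = binary_field F n for F (structure) and n +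
  fixes phi :: "'a \<Rightarrow> bool list"
  assumes phi_bij: "bij_betw phi (carrier F) (bitvecs n)"

lemma field_with_basis_imp_binary_field_with_basis:
  assumes "field_with_basis F n phi"
  shows "binary_field_with_basis F n phi"
proof -
  interpret binary_field F n
    using assms by (rule field_with_basis_binary_field)
  show ?thesis
    using assms by unfold_locales (simp add: field_with_basis_def)
qed

definition zero_set :: "('a, 'b) ring_scheme \<Rightarrow> ('a \<Rightarrow> bool list) \<Rightarrow> (bool list \<Rightarrow> bool) \<Rightarrow> 'a set" where
  "zero_set F phi p = {y \<in> carrier F. \<not> p (phi y)}"

lemma zero_set_subset: "zero_set F phi p \<subseteq> carrier F"
  by (auto simp: zero_set_def)

lemma real_sqrt_prod: "sqrt (\<Prod>x\<in>A. f x) = (\<Prod>x\<in>A. sqrt (f x))"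
  by (induction A rule: infinite_finite_induct) (auto simp: real_sqrt_mult)

lemma two_powr_neg_half: "(2::real) powr (- (real n * real m) / 2) = (1 / sqrt (2 ^ n)) ^ m"
proof -
  have "sqrt ((2::real) ^ n) = 2 powr (real n / 2)"
    by (subst powr_half_sqrt_powr) (simp_all add: powr_realpow)
  then have "1 / sqrt ((2::real) ^ n) = 2 powr (- (real n / 2))"
    by (simp add: powr_minus_divide)
  then show ?thesis
    by (simp add: powr_power mult.commute)
qed

context binary_field_with_basis
begin

lemma Rset_card: "card (Rset n m P) = (\<Prod>j<m. card (zero_set F phi (P j)))"
proof -
  have "phi ` zero_set F phi p = {v \<in> bitvecs n. p v = False}" for p
  proof -
    have "{v \<in> bitvecs n. p v = False} = {v \<in> phi ` carrier F. \<not> p v}"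
      using bij_betw_imp_surj_on[OF phi_bij] by simp
    then show ?thesis
      by (auto simp: zero_set_def)
  qed
  moreover have "inj_on phi (zero_set F phi p)" for p
    using inj_on_subset[OF bij_betw_imp_inj_on[OF phi_bij] zero_set_subset] .
  ultimately have "card {v \<in> bitvecs n. p v = False} = card (zero_set F phi p)" for p
    by (metis card_image)
  then show ?thesis
    unfolding Rset_def by (simp add: card_PiE)
qed

lemma W_eq_prod:
  assumes "y \<in> fvecs F m"
  shows "W F n m phi P y
       = (\<Prod>j<m. (if y j \<in> zero_set F phi (P j) then 1 else 0) / sqrt (card (zero_set F phi (P j))))"
proof -
  have "y j \<in> carrier F" if "j < m" for j
    using assms that by (auto simp: fvecs_def)
  then have mem: "(\<lambda>j\<in>{..<m}. phi (y j)) \<in> Rset n m P \<longleftrightarrow> (\<forall>j<m. y j \<in> zero_set F phi (P j))"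
    using phi_bij by (auto simp: Rset_def zero_set_def bij_betw_def restrict_PiE_iff)
  show ?thesis
  proof (cases "\<forall>j<m. y j \<in> zero_set F phi (P j)")
    case True
    then have "W F n m phi P y = 1 / sqrt (real (card (Rset n m P)))"
      by (simp add: W_def mem)
    also have "\<dots> = (\<Prod>j<m. 1 / sqrt (card (zero_set F phi (P j))))"
      by (simp add: Rset_card real_sqrt_prod prod_dividef)
    finally show ?thesis
      using True by simp
  next
    case False
    then have "(\<Prod>j<m. (if y j \<in> zero_set F phi (P j) then 1 else 0) / sqrt (card (zero_set F phi (P j)))) = 0"
      by (subst prod_zero_iff) auto
    moreover have "(\<lambda>j\<in>{..<m}. phi (y j)) \<notin> Rset n m P"
      using False mem by simp
    ultimately show ?thesis
      by (simp add: W_def)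
  qed
qed

lemma What_eq_prod:
  assumes e: "e \<in> fvecs F m"
  shows "What F n m phi P e
       = (\<Prod>j<m. char_sum F n (zero_set F phi (P j)) (e j) / sqrt (2 ^ n * real (card (zero_set F phi (P j)))))"
proof -
  let ?Z = "\<lambda>j. zero_set F phi (P j)"
  define h where "h j a = (if a \<in> ?Z j then 1 else 0) / sqrt (card (?Z j)) * trace_char F n (e j \<otimes> a)" for j a
  have summand: "W F n m phi P y * (if trace F n (vdot F m e y) = \<zero> then 1 else -1) = (\<Prod>j<m. h j (y j))"
    if y: "y \<in> fvecs F m" for y
  proof -
    have sign: "(if trace F n (vdot F m e y) = \<zero> then 1 else -1) = (\<Prod>j<m. trace_char F n (e j \<otimes> y j))"
      using e y unfolding vdot_def trace_char_def[symmetric]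
      by (intro trace_char_finsum) (auto simp: fvecs_def)
    show ?thesis
      by (simp only: W_eq_prod[OF y] sign h_def prod.distrib)
  qed
  have sum_h: "(\<Sum>a\<in>carrier F. h j a) = char_sum F n (?Z j) (e j) / sqrt (card (?Z j))" for j
  proof -
    have "(\<Sum>a\<in>carrier F. h j a)
        = (\<Sum>a\<in>carrier F. if a \<in> ?Z j then trace_char F n (e j \<otimes> a) / sqrt (card (?Z j)) else 0)"
      by (intro sum.cong) (auto simp: h_def)
    also have "\<dots> = (\<Sum>a\<in>?Z j. trace_char F n (e j \<otimes> a) / sqrt (card (?Z j)))"
      unfolding sum.inter_restrict[OF finite_carrier, symmetric]
      using zero_set_subset[of F phi "P j"] by (simp add: Int_absorb1)
    finally have "(\<Sum>a\<in>carrier F. h j a) = (\<Sum>a\<in>?Z j. trace_char F n (e j \<otimes> a) / sqrt (card (?Z j)))" .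
    then show ?thesis
      by (simp add: char_sum_def sum_divide_distrib)
  qed
  have "What F n m phi P e = (\<Prod>j<m. 1 / sqrt (2 ^ n)) * (\<Sum>y\<in>fvecs F m. \<Prod>j<m. h j (y j))"
    unfolding What_def two_powr_neg_half using summand by simp
  also have "(\<Sum>y\<in>fvecs F m. \<Prod>j<m. h j (y j)) = (\<Prod>j<m. \<Sum>a\<in>carrier F. h j a)"
    unfolding fvecs_def by (rule prod_sum_PiE[symmetric]) (auto simp: finite_carrier)
  finally show ?thesis
    unfolding sum_h prod.distrib[symmetric] by (simp add: real_sqrt_mult)
qed

lemma What_square:
  assumes "e \<in> fvecs F m"
  shows "(What F n m phi P e)\<^sup>2 = (\<Prod>j<m. fourier_weight F n (zero_set F phi (P j)) (e j))"
  unfolding What_eq_prod[OF assms] fourier_weight_def prod_power_distrib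
  by (intro prod.cong refl) (simp add: power_divide)

end

section \<open>Reed--Solomon codes and decoding failures\<close>

definition RS_encode ::
    "('a, 'b) ring_scheme \<Rightarrow> nat \<Rightarrow> (nat \<Rightarrow> 'a) \<Rightarrow> real \<Rightarrow> (nat \<Rightarrow> 'a) \<Rightarrow> nat \<Rightarrow> 'a" where
  "RS_encode F m gamma k c = (\<lambda>j\<in>{..<m}. \<Oplus>\<^bsub>F\<^esub>i\<in>{i. real i < k}. c i \<otimes>\<^bsub>F\<^esub> gamma j [^]\<^bsub>F\<^esub> i)"

lemma RS_code_eq_image: "RS_code F m gamma k = RS_encode F m gamma k ` ({i. real i < k} \<rightarrow>\<^sub>E carrier F)"
  unfolding RS_code_def RS_encode_def by auto

lemma real_less_eq_lessThan_ceiling: "{i::nat. real i < k} = {..<nat \<lceil>k\<rceil>}"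
  by (auto simp: zless_nat_eq_int_zless less_ceiling_iff)

lemma finite_real_less: "finite {i::nat. real i < k}"
  by (simp add: real_less_eq_lessThan_ceiling)

context binary_field
begin

context
  fixes m :: nat and gamma :: "nat \<Rightarrow> 'a" and k :: real
  assumes gamma: "gamma \<in> {..<m} \<rightarrow> carrier F" "inj_on gamma {..<m}"
begin

lemma gamma_closed: "j < m \<Longrightarrow> gamma j \<in> carrier F"
  using gamma(1) by auto

lemma RS_encode_in_fvecs: "c \<in> {i. real i < k} \<rightarrow>\<^sub>E carrier F \<Longrightarrow> RS_encode F m gamma k c \<in> fvecs F m"
  using gamma unfolding RS_encode_def fvecs_def by (auto intro!: finsum_closed)

lemma RS_code_subset_fvecs: "RS_code F m gamma k \<subseteq> fvecs F m"
  unfolding RS_code_eq_image using RS_encode_in_fvecs by auto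

lemma finite_RS_code: "finite (RS_code F m gamma k)"
  unfolding RS_code_eq_image real_less_eq_lessThan_ceiling
  using finite_carrier by (auto intro: finite_PiE)

lemma card_RS_code_le: "card (RS_code F m gamma k) \<le> (2 ^ n) ^ nat \<lceil>k\<rceil>"
proof -
  have "card (RS_code F m gamma k) \<le> card ({..<nat \<lceil>k\<rceil>} \<rightarrow>\<^sub>E carrier F)"
    unfolding RS_code_eq_image real_less_eq_lessThan_ceiling
    by (rule card_image_le) (use finite_carrier in \<open>auto intro: finite_PiE\<close>)
  also have "\<dots> = (2 ^ n) ^ nat \<lceil>k\<rceil>"
    by (simp add: card_PiE card_carrier)
  finally show ?thesis .
qed

lemma RS_encode_zero: "RS_encode F m gamma k (\<lambda>i\<in>{i. real i < k}. \<zero>) = vzero F m"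
proof -
  have "(\<Oplus>i\<in>{i. real i < k}. (\<lambda>i\<in>{i. real i < k}. \<zero>) i \<otimes> gamma j [^] i) = \<zero>" if "j < m" for j
    using that by (subst finsum_cong'[where g = "\<lambda>_. \<zero>"]) (auto simp: gamma_closed)
  then show ?thesis
    unfolding RS_encode_def vzero_def by (intro restrict_ext) auto
qed

lemma vzero_in_RS_code: "vzero F m \<in> RS_code F m gamma k"
proof -
  have "(\<lambda>i\<in>{i. real i < k}. \<zero>) \<in> {i. real i < k} \<rightarrow>\<^sub>E carrier F"
    by simp
  then show ?thesis
    unfolding RS_code_eq_image RS_encode_zero[symmetric] by (rule imageI)
qed

lemma vsub_in_RS_code:
  assumes "x \<in> RS_code F m gamma k" "x' \<in> RS_code F m gamma k"
  shows "vsub F m x' x \<in> RS_code F m gamma k"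
proof -
  obtain c c' where c: "c \<in> {i. real i < k} \<rightarrow>\<^sub>E carrier F" "x = RS_encode F m gamma k c"
    and c': "c' \<in> {i. real i < k} \<rightarrow>\<^sub>E carrier F" "x' = RS_encode F m gamma k c'"
    using assms unfolding RS_code_eq_image by auto
  define d where "d = (\<lambda>i\<in>{i. real i < k}. c' i \<oplus> c i)"
  have d: "d \<in> {i. real i < k} \<rightarrow>\<^sub>E carrier F"
    using c c' by (auto simp: d_def)
  have "x' j \<ominus> x j = (\<Oplus>i\<in>{i. real i < k}. d i \<otimes> gamma j [^] i)" if "j < m" for j
  proof -
    have g: "gamma j \<in> carrier F" using gamma_closed that .
    have "x' j \<ominus> x j = (\<Oplus>i\<in>{i. real i < k}. c' i \<otimes> gamma j [^] i) \<oplus> (\<Oplus>i\<in>{i. real i < k}. c i \<otimes> gamma j [^] i)"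
      using c c' g that
      by (simp add: RS_encode_def) (intro minus_eq_add finsum_closed; auto simp: PiE_iff)
    also have "\<dots> = (\<Oplus>i\<in>{i. real i < k}. c' i \<otimes> gamma j [^] i \<oplus> c i \<otimes> gamma j [^] i)"
      using c c' g by (intro finsum_addf[symmetric]) (auto simp: PiE_iff)
    also have "\<dots> = (\<Oplus>i\<in>{i. real i < k}. d i \<otimes> gamma j [^] i)"
      using c c' g by (intro finsum_cong') (auto simp: d_def l_distr PiE_iff)
    finally show ?thesis .
  qed
  then have "vsub F m x' x = RS_encode F m gamma k d"
    unfolding vsub_def RS_encode_def by (intro restrict_ext) auto
  then show ?thesis
    unfolding RS_code_eq_image using d by auto
qed

text \<open>A nonzero codeword comes from a nonzero polynomial of degree \<open>< k\<close>, whose roots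
  among the distinct evaluation points are its zero coordinates.\<close>

lemma card_zeros_RS_code_less:
  assumes "x \<in> RS_code F m gamma k" "x \<noteq> vzero F m"
  shows "card {j\<in>{..<m}. x j = \<zero>} < nat \<lceil>k\<rceil>"
proof -
  obtain c where c: "c \<in> {i. real i < k} \<rightarrow>\<^sub>E carrier F" and x: "x = RS_encode F m gamma k c"
    using assms(1) unfolding RS_code_eq_image by auto
  let ?S = "{i\<in>{i. real i < k}. c i \<noteq> \<zero>}"
  have "?S \<noteq> {}"
  proof
    assume "?S = {}"
    then have "c = (\<lambda>i\<in>{i. real i < k}. \<zero>)"
      using c by (auto simp: PiE_iff extensional_def)
    then show False
      using assms(2) x RS_encode_zero by simp
  qed
  moreover have fin: "finite ?S"
    using finite_real_less by simp
  define d where "d = Max ?S"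
  ultimately have d: "real d < k" "c d \<noteq> \<zero>" "\<And>i. real i < k \<Longrightarrow> c i \<noteq> \<zero> \<Longrightarrow> i \<le> d"
    using Max_in[OF fin] Max_ge[OF fin] by (auto simp: d_def)
  have d_less: "d < nat \<lceil>k\<rceil>"
    using d(1) real_less_eq_lessThan_ceiling by blast
  have atMost_d: "{..d} \<subseteq> {i. real i < k}"
    using d(1) by auto
  have c_high: "c i = \<zero>" if "real i < k" "d < i" for i
    using d(3) that by force
  have poly: "(\<Oplus>i\<in>{i. real i < k}. c i \<otimes> a [^] i) = (\<Oplus>i\<in>{..d}. c i \<otimes> a [^] i)"
    if "a \<in> carrier F" for a
    by (rule add.finprod_mono_neutral_cong_right)
       (use finite_real_less atMost_d c_high c that in \<open>auto simp: PiE_iff not_le\<close>)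
  have "gamma ` {j\<in>{..<m}. x j = \<zero>} \<subseteq> {a \<in> carrier F. (\<Oplus>i\<in>{..d}. c i \<otimes> a [^] i) = \<zero>}"
    using poly[OF gamma_closed] gamma_closed by (auto simp: x RS_encode_def)
  then have "card (gamma ` {j\<in>{..<m}. x j = \<zero>}) \<le> card {a \<in> carrier F. (\<Oplus>i\<in>{..d}. c i \<otimes> a [^] i) = \<zero>}"
    by (rule card_mono[rotated]) (use finite_carrier in auto)
  also have "\<dots> \<le> d"
    by (rule card_roots_finsum_le) (use finite_carrier c atMost_d d(2) in \<open>auto simp: PiE_iff\<close>)
  finally show ?thesis
    using d_less card_image[OF inj_on_subset[OF gamma(2)], of "{j\<in>{..<m}. x j = \<zero>}"] by force
qed

end

end

lemma Decode_other_candidate: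
  assumes "x \<in> GS_list F m gamma \<alpha> z" "real (hw F m (vsub F m z x)) \<le> (1/2 + \<epsilon>) * real m"
    and "Decode F m gamma \<alpha> \<epsilon> z \<noteq> x"
  shows "\<exists>x'\<in>GS_list F m gamma \<alpha> z. real (hw F m (vsub F m z x')) \<le> (1/2 + \<epsilon>) * real m \<and> x' \<noteq> x"
proof (rule ccontr)
  define Cand where "Cand = {x \<in> GS_list F m gamma \<alpha> z. real (hw F m (vsub F m z x)) \<le> (1/2 + \<epsilon>) * real m}"
  assume "\<not> ?thesis"
  then have "Cand = {x}"
    using assms(1,2) unfolding Cand_def by blast
  then have "Decode F m gamma \<alpha> \<epsilon> z = x"
    unfolding Decode_def Let_def Cand_def[symmetric] by simp
  then show False
    using assms(3) by contradiction
qed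

context binary_field
begin

lemma fvecs_closed: "x \<in> fvecs F m \<Longrightarrow> j < m \<Longrightarrow> x j \<in> carrier F"
  by (auto simp: fvecs_def)

lemma finite_fvecs: "finite (fvecs F m)"
  using finite_carrier by (simp add: fvecs_def finite_PiE)

lemma add_eq_iff_eq_add:
  assumes "a \<in> carrier F" "b \<in> carrier F" "c \<in> carrier F"
  shows "a \<oplus> b = c \<longleftrightarrow> b = c \<oplus> a"
proof
  assume "a \<oplus> b = c"
  then show "b = c \<oplus> a"
    using assms add_add_cancel_left[of a b] a_comm[of a c] by simp
next
  assume "b = c \<oplus> a"
  then show "a \<oplus> b = c"
    using assms add_add_cancel_left[of a c] a_comm[of a c] by simp
qed

lemma vsub_vadd_cancel:
  assumes "x \<in> fvecs F m" "e \<in> fvecs F m"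
  shows "vsub F m (vadd F m x e) x = e"
proof (rule ext)
  fix j
  show "vsub F m (vadd F m x e) x j = e j"
  proof (cases "j < m")
    case True
    have x: "x j \<in> carrier F" and e: "e j \<in> carrier F"
      using fvecs_closed[OF assms(1) True] fvecs_closed[OF assms(2) True] .
    have "vsub F m (vadd F m x e) x j = (x j \<oplus> e j) \<ominus> x j"
      using True by (simp add: vsub_def vadd_def)
    also have "\<dots> = x j \<oplus> (x j \<oplus> e j)"
      using x e by (simp add: minus_eq_add a_comm)
    also have "\<dots> = e j"
      using x e by (rule add_add_cancel_left)
    finally show ?thesis .
  next
    case False
    then show ?thesis
      using PiE_arb[OF assms(2)[unfolded fvecs_def], of j] by (simp add: vsub_def)
  qed
qed

lemma vsub_eq_vzero_iff:
  assumes "x \<in> fvecs F m" "x' \<in> fvecs F m"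
  shows "vsub F m x' x = vzero F m \<longleftrightarrow> x' = x"
proof
  assume zero: "vsub F m x' x = vzero F m"
  have "x' j = x j" if "j < m" for j
  proof -
    have "x' j \<ominus> x j = \<zero>"
      using fun_cong[OF zero, of j] that by (simp add: vsub_def vzero_def)
    then show ?thesis
      using fvecs_closed[OF assms(1) that] fvecs_closed[OF assms(2) that]
      by (simp add: minus_eq_add add_eq_zero_iff)
  qed
  then show "x' = x"
    using assms by (intro extensionalityI[of _ "{..<m}"]) (auto simp: fvecs_def PiE_iff)
next
  assume "x' = x"
  then show "vsub F m x' x = vzero F m"
    unfolding vsub_def vzero_def using fvecs_closed[OF assms(1)]
    by (intro restrict_ext) (simp add: minus_eq_add add_self)
qed

lemma hw_vsub_vadd:
  assumes "x \<in> fvecs F m" "e \<in> fvecs F m" "x' \<in> fvecs F m"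
  shows "hw F m (vsub F m (vadd F m x e) x') = card {j\<in>{..<m}. e j \<noteq> vsub F m x' x j}"
proof -
  have "vsub F m (vadd F m x e) x' j = \<zero> \<longleftrightarrow> e j = vsub F m x' x j" if "j < m" for j
    using that fvecs_closed[OF assms(1) that] fvecs_closed[OF assms(2) that] fvecs_closed[OF assms(3) that]
      add_eq_iff_eq_add[of "x j" "e j" "x' j"]
    by (auto simp: vsub_def vadd_def minus_eq_add add_eq_zero_iff)
  then show ?thesis
    unfolding hw_def by (intro arg_cong[where f = card]) auto
qed

text \<open>An error pattern defeats the decoder only if it is heavy or agrees with a nonzero
  codeword in many positions: a second candidate \<open>x'\<close> besides the sent codeword \<open>x\<close>
  produces the nonzero codeword \<open>x' - x\<close> that \<open>e\<close> matches outside the errors of \<open>x'\<close>.\<close>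

lemma bad_error_cases:
  assumes gamma: "gamma \<in> {..<m} \<rightarrow> carrier F" "inj_on gamma {..<m}"
    and radius: "(1/2 + \<epsilon>) * real m \<le> real m - sqrt ((1 - \<alpha>) * real m * real m)"
    and e: "e \<in> bad_errors F m gamma \<alpha> \<epsilon>"
  shows "(1/2 + \<epsilon>) * real m < real (hw F m e)
    \<or> (\<exists>c\<in>RS_code F m gamma ((1 - \<alpha>) * real m) - {vzero F m}.
          real m - (1/2 + \<epsilon>) * real m \<le> real (card {j\<in>{..<m}. e j = c j}))"
proof (cases "(1/2 + \<epsilon>) * real m < real (hw F m e)")
  case light: False
  let ?C = "RS_code F m gamma ((1 - \<alpha>) * real m)"
  obtain x where x: "x \<in> ?C" and fail: "Decode F m gamma \<alpha> \<epsilon> (vadd F m x e) \<noteq> x"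
    and e_vec: "e \<in> fvecs F m"
    using e unfolding bad_errors_def by blast
  have x_vec: "x \<in> fvecs F m"
    using x RS_code_subset_fvecs[OF gamma] by auto
  have "x \<in> GS_list F m gamma \<alpha> (vadd F m x e)"
    using x light radius by (simp add: GS_list_def hdist_def vsub_vadd_cancel[OF x_vec e_vec])
  then obtain x' where x': "x' \<in> ?C" "x' \<noteq> x"
    and close: "real (hw F m (vsub F m (vadd F m x e) x')) \<le> (1/2 + \<epsilon>) * real m"
    using Decode_other_candidate[OF _ _ fail] light
    by (auto simp: vsub_vadd_cancel[OF x_vec e_vec] GS_list_def)
  have x'_vec: "x' \<in> fvecs F m"
    using x' RS_code_subset_fvecs[OF gamma] by auto
  let ?c = "vsub F m x' x"
  have "?c \<in> ?C - {vzero F m}"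
    using vsub_in_RS_code[OF gamma x x'(1)] vsub_eq_vzero_iff[OF x_vec x'_vec] x'(2) by simp
  moreover have "m = card {j\<in>{..<m}. e j = ?c j} + card {j\<in>{..<m}. e j \<noteq> ?c j}"
    using card_Int_Diff[of "{..<m}" "{j. e j = ?c j}"] by (simp add: set_diff_eq Int_def)
  ultimately show ?thesis
    using close hw_vsub_vadd[OF x_vec e_vec x'_vec] by (intro disjI2 bexI[of _ ?c]) linarith+
qed simp

lemma sum_BAD_eq_sum_bad_errors:
  assumes "gamma \<in> {..<m} \<rightarrow> carrier F" "inj_on gamma {..<m}"
  shows "(\<Sum>(x, e)\<in>BAD F m gamma \<alpha> \<epsilon>. \<bar>Vhat F m gamma \<alpha> x * w e\<bar>\<^sup>2)
    = (\<Sum>e\<in>bad_errors F m gamma \<alpha> \<epsilon>. \<bar>w e\<bar>\<^sup>2)"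
proof -
  let ?C = "RS_code F m gamma ((1 - \<alpha>) * real m)" and ?B = "bad_errors F m gamma \<alpha> \<epsilon>"
  have fin: "finite (fvecs F m)" "finite ?C" "finite ?B"
    using finite_fvecs finite_RS_code[OF assms] finite_subset[OF _ finite_fvecs]
    by (auto simp: bad_errors_def)
  have card_pos: "card ?C > 0"
    using fin(2) vzero_in_RS_code[OF assms] by (auto simp: card_gt_0_iff)
  have "(\<Sum>(x, e)\<in>BAD F m gamma \<alpha> \<epsilon>. \<bar>Vhat F m gamma \<alpha> x * w e\<bar>\<^sup>2)
      = (\<Sum>(x, e)\<in>?C \<times> ?B. \<bar>Vhat F m gamma \<alpha> x * w e\<bar>\<^sup>2)"
    unfolding BAD_def using fin
    by (subst sum.union_disjoint) (auto intro!: sum.neutral simp: Vhat_def)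
  also have "\<dots> = (\<Sum>x\<in>?C. \<Sum>e\<in>?B. \<bar>w e\<bar>\<^sup>2 / real (card ?C))"
    unfolding sum.cartesian_product[symmetric]
    by (intro sum.cong refl) (simp add: Vhat_def power_mult_distrib power_divide)
  also have "\<dots> = (\<Sum>e\<in>?B. \<bar>w e\<bar>\<^sup>2)"
    using card_pos by (simp add: sum_divide_distrib[symmetric])
  finally show ?thesis .
qed

end

section \<open>An exponentially tilted union bound\<close>

lemma prod_if_eq_power_card:
  "finite A \<Longrightarrow> (\<Prod>j\<in>A. if P j then (x::real) else 1) = x ^ card {j\<in>A. P j}"
  by (simp add: prod.If_cases Int_def conj_commute)

lemma sum_PiE_prod_power_card:
  fixes g :: "nat \<Rightarrow> 'a \<Rightarrow> real"
  assumes "finite A"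
  shows "(\<Sum>e\<in>{..<m} \<rightarrow>\<^sub>E A. (\<Prod>j<m. g j (e j)) * x ^ card {j\<in>{..<m}. Q j (e j)})
       = (\<Prod>j<m. \<Sum>a\<in>A. g j a * (if Q j a then x else 1))"
proof -
  have "(\<Prod>j<m. g j (e j)) * x ^ card {j\<in>{..<m}. Q j (e j)} = (\<Prod>j<m. g j (e j) * (if Q j (e j) then x else 1))" for e
    by (simp add: prod.distrib prod_if_eq_power_card)
  then show ?thesis
    using assms by (simp add: prod_sum_PiE)
qed

definition tilt_nonzero :: "('a, 'b) ring_scheme \<Rightarrow> nat \<Rightarrow> real \<Rightarrow> 'a set \<Rightarrow> real" where
  "tilt_nonzero F n x Z = (\<Sum>a\<in>carrier F. fourier_weight F n Z a * (if a = \<zero>\<^bsub>F\<^esub> then 1 else x))"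

definition tilt_match :: "('a, 'b) ring_scheme \<Rightarrow> nat \<Rightarrow> 'a \<Rightarrow> 'a set \<Rightarrow> real" where
  "tilt_match F n b Z = (\<Sum>a\<in>carrier F. fourier_weight F n Z a * (if a = b then 2 ^ n else 1))"

context binary_field
begin

lemma sum_fourier_weight_tilt_nonzero:
  assumes "x > 0"
  shows "(\<Sum>e\<in>fvecs F m. (\<Prod>j<m. fourier_weight F n (Z j) (e j)) * x powr (real (hw F m e) - t))
       = x powr (- t) * (\<Prod>j<m. tilt_nonzero F n x (Z j))"
proof -
  have "x powr (real (hw F m e) - t) = x powr (- t) * x ^ card {j\<in>{..<m}. e j \<noteq> \<zero>}" for e
    using assms by (simp add: hw_def powr_diff powr_realpow powr_minus_divide)
  then have "(\<Sum>e\<in>fvecs F m. (\<Prod>j<m. fourier_weight F n (Z j) (e j)) * x powr (real (hw F m e) - t))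
      = x powr (- t) * (\<Sum>e\<in>fvecs F m. (\<Prod>j<m. fourier_weight F n (Z j) (e j)) * x ^ card {j\<in>{..<m}. e j \<noteq> \<zero>})"
    by (simp add: sum_distrib_left mult_ac)
  also have "\<dots> = x powr (- t) * (\<Prod>j<m. tilt_nonzero F n x (Z j))"
    using sum_PiE_prod_power_card[OF finite_carrier, where m = m and g = "\<lambda>j. fourier_weight F n (Z j)"
        and x = x and Q = "\<lambda>_ a. a \<noteq> \<zero>"]
    by (auto simp: fvecs_def tilt_nonzero_def intro!: prod.cong sum.cong)
  finally show ?thesis .
qed

lemma sum_fourier_weight_tilt_match:
  "(\<Sum>e\<in>fvecs F m. (\<Prod>j<m. fourier_weight F n (Z j) (e j))
       * (2 ^ n) powr (real (card {j\<in>{..<m}. e j = c j}) - s))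
   = (2 ^ n) powr (- s) * (\<Prod>j<m. tilt_match F n (c j) (Z j))"
proof -
  have "((2::real) ^ n) powr (real (card {j\<in>{..<m}. e j = c j}) - s)
      = (2 ^ n) powr (- s) * (2 ^ n) ^ card {j\<in>{..<m}. e j = c j}" for e
    by (simp add: powr_diff powr_realpow powr_minus_divide)
  then have "(\<Sum>e\<in>fvecs F m. (\<Prod>j<m. fourier_weight F n (Z j) (e j))
       * (2 ^ n) powr (real (card {j\<in>{..<m}. e j = c j}) - s))
      = (2 ^ n) powr (- s) * (\<Sum>e\<in>fvecs F m. (\<Prod>j<m. fourier_weight F n (Z j) (e j))
       * (2 ^ n) ^ card {j\<in>{..<m}. e j = c j})"
    by (simp add: sum_distrib_left mult_ac)
  also have "\<dots> = (2 ^ n) powr (- s) * (\<Prod>j<m. tilt_match F n (c j) (Z j))"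
    using sum_PiE_prod_power_card[OF finite_carrier, where m = m and g = "\<lambda>j. fourier_weight F n (Z j)"
        and x = "2 ^ n" and Q = "\<lambda>j a. a = c j"]
    by (simp add: fvecs_def tilt_match_def)
  finally show ?thesis .
qed

lemma tilt_nonzero_nonneg: "x \<ge> 1 \<Longrightarrow> tilt_nonzero F n x Z \<ge> 0"
  unfolding tilt_nonzero_def by (intro sum_nonneg mult_nonneg_nonneg) (auto simp: fourier_weight_nonneg)

lemma tilt_nonzero_le:
  assumes "Z \<subseteq> carrier F" "x \<ge> 1"
  shows "tilt_nonzero F n x Z \<le> x - (x - 1) * (real (card Z) / 2 ^ n)"
proof -
  have "tilt_nonzero F n x Z
      = x * (\<Sum>a\<in>carrier F. fourier_weight F n Z a) - (x - 1) * fourier_weight F n Z \<zero>"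
    unfolding tilt_nonzero_def sum_distrib_left
    by (subst sum.remove[OF finite_carrier zero_closed])+ (simp add: algebra_simps sum_distrib_left)
  also have "\<dots> \<le> x - (x - 1) * (real (card Z) / 2 ^ n)"
    using sum_fourier_weight[OF assms(1)] assms(2) by (simp add: fourier_weight_zero[OF assms(1)])
  finally show ?thesis .
qed

lemma tilt_nonzero_le_self:
  assumes "Z \<subseteq> carrier F" "x \<ge> 1"
  shows "tilt_nonzero F n x Z \<le> x"
proof -
  have "0 \<le> (x - 1) * (real (card Z) / 2 ^ n)"
    using assms(2) by simp
  then show ?thesis
    using tilt_nonzero_le[OF assms] by linarith
qed

lemma tilt_match_nonneg: "tilt_match F n b Z \<ge> 0"
  unfolding tilt_match_def by (intro sum_nonneg mult_nonneg_nonneg) (auto simp: fourier_weight_nonneg)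

lemma tilt_match_le:
  assumes "Z \<subseteq> carrier F" "b \<in> carrier F"
  shows "tilt_match F n b Z \<le> 1 + (2 ^ n - 1) * fourier_weight F n Z b"
proof -
  have "tilt_match F n b Z = (\<Sum>a\<in>carrier F. fourier_weight F n Z a) + (2 ^ n - 1) * fourier_weight F n Z b"
    unfolding tilt_match_def
    by (subst (1 2) sum.remove[OF finite_carrier assms(2)]) (simp add: algebra_simps)
  then show ?thesis
    using sum_fourier_weight[OF assms(1)] by simp
qed

lemma tilt_match_le_card:
  assumes "Z \<subseteq> carrier F" "b \<in> carrier F"
  shows "tilt_match F n b Z \<le> 2 ^ n"
proof -
  have "(2 ^ n - 1) * fourier_weight F n Z b \<le> (2 ^ n - 1) * 1"
    using fourier_weight_le_one[OF assms(1)] by (intro mult_left_mono) auto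
  then show ?thesis
    using tilt_match_le[OF assms] by simp
qed

end

definition bad_weight_bound ::
    "('a, 'b) ring_scheme \<Rightarrow> nat \<Rightarrow> ('a \<Rightarrow> bool list) \<Rightarrow> nat \<Rightarrow> (nat \<Rightarrow> 'a) \<Rightarrow> real \<Rightarrow> real \<Rightarrow> real
      \<Rightarrow> (nat \<Rightarrow> bool list \<Rightarrow> bool) \<Rightarrow> real" where
  "bad_weight_bound F n phi m gamma \<alpha> \<epsilon> x P =
     x powr (- ((1/2 + \<epsilon>) * real m)) * (\<Prod>j<m. tilt_nonzero F n x (zero_set F phi (P j)))
     + (\<Sum>c\<in>RS_code F m gamma ((1 - \<alpha>) * real m) - {vzero F m}.
          (2 ^ n) powr (- (real m - (1/2 + \<epsilon>) * real m))
          * (\<Prod>j<m. tilt_match F n (c j) (zero_set F phi (P j))))"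

context binary_field
begin

text \<open>The union bound of \<open>bad_error_cases\<close>, with each indicator replaced by an exponential
  that is at least \<open>1\<close> on its event.\<close>

lemma bad_error_tilt_ge_one:
  assumes gamma: "gamma \<in> {..<m} \<rightarrow> carrier F" "inj_on gamma {..<m}"
    and radius: "(1/2 + \<epsilon>) * real m \<le> real m - sqrt ((1 - \<alpha>) * real m * real m)"
    and x: "x > 1" and e: "e \<in> bad_errors F m gamma \<alpha> \<epsilon>"
  shows "1 \<le> x powr (real (hw F m e) - (1/2 + \<epsilon>) * real m)
    + (\<Sum>c\<in>RS_code F m gamma ((1 - \<alpha>) * real m) - {vzero F m}.
         (2 ^ n) powr (real (card {j\<in>{..<m}. e j = c j}) - (real m - (1/2 + \<epsilon>) * real m)))"
    (is "1 \<le> ?heavy + (\<Sum>c\<in>?C0. ?agree c)")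
proof -
  have agree_nonneg: "(\<Sum>c\<in>?C0. ?agree c) \<ge> 0"
    by (simp add: sum_nonneg)
  from bad_error_cases[OF gamma radius e] show ?thesis
  proof
    assume "(1/2 + \<epsilon>) * real m < real (hw F m e)"
    then have "1 \<le> ?heavy"
      using x by (intro ge_one_powr_ge_zero) auto
    then show ?thesis
      using agree_nonneg by linarith
  next
    assume "\<exists>c\<in>?C0. real m - (1/2 + \<epsilon>) * real m \<le> real (card {j\<in>{..<m}. e j = c j})"
    then obtain c where c: "c \<in> ?C0" and "real m - (1/2 + \<epsilon>) * real m \<le> real (card {j\<in>{..<m}. e j = c j})"
      by blast
    then have "1 \<le> ?agree c"
      by (intro ge_one_powr_ge_zero) auto
    also have "\<dots> \<le> (\<Sum>c\<in>?C0. ?agree c)"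
      using c finite_RS_code[OF gamma] by (intro member_le_sum) auto
    finally show ?thesis
      by (intro add_increasing) auto
  qed
qed

end

lemma (in binary_field_with_basis) sum_bad_What_square_le:
  assumes gamma: "gamma \<in> {..<m} \<rightarrow> carrier F" "inj_on gamma {..<m}"
    and radius: "(1/2 + \<epsilon>) * real m \<le> real m - sqrt ((1 - \<alpha>) * real m * real m)"
    and x: "x > 1"
  shows "(\<Sum>e\<in>bad_errors F m gamma \<alpha> \<epsilon>. \<bar>What F n m phi P e\<bar>\<^sup>2) \<le> bad_weight_bound F n phi m gamma \<alpha> \<epsilon> x P"
proof -
  let ?t = "(1/2 + \<epsilon>) * real m"
  let ?C0 = "RS_code F m gamma ((1 - \<alpha>) * real m) - {vzero F m}"
  let ?q = "\<lambda>e. \<Prod>j<m. fourier_weight F n (zero_set F phi (P j)) (e j)"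
  let ?heavy = "\<lambda>e. x powr (real (hw F m e) - ?t)"
  let ?agree = "\<lambda>c e. (2 ^ n) powr (real (card {j\<in>{..<m}. e j = c j}) - (real m - ?t))"
  have q_nonneg: "?q e \<ge> 0" for e
    by (simp add: prod_nonneg fourier_weight_nonneg)
  have tilt_nonneg: "?heavy e + (\<Sum>c\<in>?C0. ?agree c e) \<ge> 0" for e
    by (simp add: add_nonneg_nonneg sum_nonneg)
  have bad_vecs: "bad_errors F m gamma \<alpha> \<epsilon> \<subseteq> fvecs F m"
    by (auto simp: bad_errors_def)
  have "(\<Sum>e\<in>bad_errors F m gamma \<alpha> \<epsilon>. \<bar>What F n m phi P e\<bar>\<^sup>2) = (\<Sum>e\<in>bad_errors F m gamma \<alpha> \<epsilon>. ?q e)"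
    using bad_vecs by (intro sum.cong) (auto simp: What_square)
  also have "\<dots> \<le> (\<Sum>e\<in>bad_errors F m gamma \<alpha> \<epsilon>. ?q e * (?heavy e + (\<Sum>c\<in>?C0. ?agree c e)))"
  proof (rule sum_mono)
    fix e
    assume "e \<in> bad_errors F m gamma \<alpha> \<epsilon>"
    then have "1 \<le> ?heavy e + (\<Sum>c\<in>?C0. ?agree c e)"
      by (rule bad_error_tilt_ge_one[OF gamma radius x])
    then show "?q e \<le> ?q e * (?heavy e + (\<Sum>c\<in>?C0. ?agree c e))"
      using q_nonneg[of e] by (simp add: mult_le_cancel_left1)
  qed
  also have "\<dots> \<le> (\<Sum>e\<in>fvecs F m. ?q e * (?heavy e + (\<Sum>c\<in>?C0. ?agree c e)))"
    by (rule sum_mono2[OF finite_fvecs bad_vecs]) (intro mult_nonneg_nonneg q_nonneg tilt_nonneg)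
  also have "\<dots> = (\<Sum>e\<in>fvecs F m. ?q e * ?heavy e) + (\<Sum>e\<in>fvecs F m. \<Sum>c\<in>?C0. ?q e * ?agree c e)"
    by (simp add: distrib_left sum.distrib sum_distrib_left)
  also have "(\<Sum>e\<in>fvecs F m. \<Sum>c\<in>?C0. ?q e * ?agree c e) = (\<Sum>c\<in>?C0. \<Sum>e\<in>fvecs F m. ?q e * ?agree c e)"
    by (rule sum.swap)
  also have "(\<Sum>e\<in>fvecs F m. ?q e * ?heavy e) + (\<Sum>c\<in>?C0. \<Sum>e\<in>fvecs F m. ?q e * ?agree c e)
      = bad_weight_bound F n phi m gamma \<alpha> \<epsilon> x P"
    using x unfolding bad_weight_bound_def sum_fourier_weight_tilt_match
    by (subst sum_fourier_weight_tilt_nonzero) simp_all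
  finally show ?thesis .
qed

section \<open>Pairwise independent random functions\<close>

definition sign_at :: "(bool list \<Rightarrow> bool) \<Rightarrow> bool list \<Rightarrow> real" where
  "sign_at p v = (if p v then -1 else 1)"

lemma abs_sign_at [simp]: "\<bar>sign_at p v\<bar> = 1"
  by (simp add: sign_at_def)

lemma sign_at_square: "sign_at p v * sign_at p v = 1"
  by (simp add: sign_at_def)

lemma sign_at_eq_indicator: "sign_at p v = 1 - 2 * indicator {p. p v} p"
  by (simp add: sign_at_def indicator_def)

lemma integrable_measure_pmf_bounded:
  fixes f :: "'a \<Rightarrow> real"
  assumes "\<And>p. \<bar>f p\<bar> \<le> B"
  shows "integrable (measure_pmf D) f"
  by (rule measure_pmf.integrable_const_bound[where B = B]) (use assms in auto)

lemma expectation_one_minus_two_indicator: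
  "measure_pmf.expectation D (\<lambda>p. 1 - 2 * indicator A p) = 1 - 2 * measure_pmf.prob D A"
proof -
  have "integrable (measure_pmf D) (\<lambda>p. 2 * indicator A p :: real)"
    by (rule integrable_measure_pmf_bounded[where B = 2]) (simp add: indicator_def)
  then show ?thesis
    by (simp add: Bochner_Integration.integral_diff measure_pmf.prob_space)
qed

context
  fixes D :: "(bool list \<Rightarrow> bool) pmf" and n :: nat
  assumes pairwise: "two_wise_independent n D" and n_pos: "n \<ge> 1"
begin

lemma prob_eval_pair:
  "v \<in> bitvecs n \<Longrightarrow> w \<in> bitvecs n \<Longrightarrow> v \<noteq> w \<Longrightarrow> measure_pmf.prob D {p. p v = a \<and> p w = b} = 1/4"
  using pairwise unfolding two_wise_independent_def by blast

lemma prob_eval: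
  assumes v: "v \<in> bitvecs n"
  shows "measure_pmf.prob D {p. p v = a} = 1/2"
proof -
  \<comment> \<open>marginalise over the value at a second point, which exists as \<open>n \<ge> 1\<close>\<close>
  let ?w = "map Not v"
  have "v \<noteq> []"
    using v n_pos by (auto simp: bitvecs_def)
  then have w: "?w \<in> bitvecs n" "v \<noteq> ?w"
    using v by (auto simp: bitvecs_def neq_Nil_conv)
  have "{p. p v = a} = {p. p v = a \<and> p ?w = True} \<union> {p. p v = a \<and> p ?w = False}"
    by auto
  then have "measure_pmf.prob D {p. p v = a}
      = measure_pmf.prob D {p. p v = a \<and> p ?w = True} + measure_pmf.prob D {p. p v = a \<and> p ?w = False}"
    by (simp add: measure_pmf.finite_measure_Union disjoint_iff)
  then show ?thesis
    using prob_eval_pair[OF v w(1,2), of a True] prob_eval_pair[OF v w(1,2), of a False] by simp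
qed

lemma expectation_sign_at:
  "v \<in> bitvecs n \<Longrightarrow> measure_pmf.expectation D (\<lambda>p. sign_at p v) = 0"
  using prob_eval[of v True] by (simp add: sign_at_eq_indicator expectation_one_minus_two_indicator)

lemma expectation_sign_at_mult:
  assumes v: "v \<in> bitvecs n" and w: "w \<in> bitvecs n" and "v \<noteq> w"
  shows "measure_pmf.expectation D (\<lambda>p. sign_at p v * sign_at p w) = 0"
proof -
  have "(\<lambda>p. sign_at p v * sign_at p w) = (\<lambda>p. 1 - 2 * indicator {p. p v \<noteq> p w} p)"
    by (auto simp: sign_at_def indicator_def)
  moreover have "{p. p v \<noteq> p w} = {p. p v = True \<and> p w = False} \<union> {p. p v = False \<and> p w = True}"
    by auto
  then have "measure_pmf.prob D {p. p v \<noteq> p w}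
      = measure_pmf.prob D {p. p v = True \<and> p w = False} + measure_pmf.prob D {p. p v = False \<and> p w = True}"
    by (simp add: measure_pmf.finite_measure_Union disjoint_iff)
  then have "measure_pmf.prob D {p. p v \<noteq> p w} = 1/2"
    using prob_eval_pair[OF assms, of True False] prob_eval_pair[OF assms, of False True] by simp
  ultimately show ?thesis
    by (simp add: expectation_one_minus_two_indicator)
qed

text \<open>Pairwise independence is exactly what makes the random signs orthonormal.\<close>

lemma expectation_sum_sign_at_square:
  assumes "finite A" "inj_on phi A" "phi ` A \<subseteq> bitvecs n"
  shows "measure_pmf.expectation D (\<lambda>p. (\<Sum>y\<in>A. sign_at p (phi y) * w y)\<^sup>2) = (\<Sum>y\<in>A. (w y)\<^sup>2)"
proof -
  have integrable: "integrable (measure_pmf D) (\<lambda>p. w y * w y' * (sign_at p (phi y) * sign_at p (phi y')))" for y y'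
    by (rule integrable_measure_pmf_bounded[where B = "\<bar>w y * w y'\<bar>"]) (simp add: abs_mult)
  have "measure_pmf.expectation D (\<lambda>p. (\<Sum>y\<in>A. sign_at p (phi y) * w y)\<^sup>2)
      = measure_pmf.expectation D (\<lambda>p. \<Sum>y\<in>A. \<Sum>y'\<in>A. w y * w y' * (sign_at p (phi y) * sign_at p (phi y')))"
    by (simp add: power2_eq_square sum_product mult_ac)
  also have "\<dots> = (\<Sum>y\<in>A. \<Sum>y'\<in>A. w y * w y' * measure_pmf.expectation D (\<lambda>p. sign_at p (phi y) * sign_at p (phi y')))"
    using integrable by (simp add: Bochner_Integration.integral_sum integrable_sum)
  also have "\<dots> = (\<Sum>y\<in>A. \<Sum>y'\<in>A. if y = y' then (w y)\<^sup>2 else 0)"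
    using assms(2,3) by (intro sum.cong refl)
      (auto simp: sign_at_square power2_eq_square inj_on_def intro!: expectation_sign_at_mult)
  also have "\<dots> = (\<Sum>y\<in>A. (w y)\<^sup>2)"
    using assms(1) by simp
  finally show ?thesis .
qed

end

section \<open>Expected Fourier weights of random zero sets\<close>

definition sign_sum :: "('a, 'b) ring_scheme \<Rightarrow> ('a \<Rightarrow> bool list) \<Rightarrow> (bool list \<Rightarrow> bool) \<Rightarrow> real" where
  "sign_sum F phi p = (\<Sum>y\<in>carrier F. sign_at p (phi y))"

definition signed_char_sum ::
    "('a, 'b) ring_scheme \<Rightarrow> nat \<Rightarrow> ('a \<Rightarrow> bool list) \<Rightarrow> 'a \<Rightarrow> (bool list \<Rightarrow> bool) \<Rightarrow> real" where
  "signed_char_sum F n phi b p = (\<Sum>y\<in>carrier F. sign_at p (phi y) * trace_char F n (b \<otimes>\<^bsub>F\<^esub> y))"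

context binary_field_with_basis
begin

lemma sum_zero_set_eq:
  "(\<Sum>y\<in>zero_set F phi p. g y) = (\<Sum>y\<in>carrier F. (1 + sign_at p (phi y)) / 2 * g y)"
proof -
  have "(\<Sum>y\<in>carrier F. (1 + sign_at p (phi y)) / 2 * g y) = (\<Sum>y\<in>carrier F. if y \<in> zero_set F phi p then g y else 0)"
    by (intro sum.cong) (auto simp: sign_at_def zero_set_def)
  also have "\<dots> = (\<Sum>y\<in>zero_set F phi p. g y)"
    unfolding sum.inter_restrict[OF finite_carrier, symmetric]
    using zero_set_subset[of F phi p] by (simp add: Int_absorb1)
  finally show ?thesis ..
qed

lemma card_zero_set_eq: "real (card (zero_set F phi p)) = (2 ^ n + sign_sum F phi p) / 2"
  using sum_zero_set_eq[where p = p and g = "\<lambda>_. 1"]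
  by (simp add: sign_sum_def card_carrier sum.distrib add_divide_distrib sum_divide_distrib[symmetric])

lemma char_sum_zero_set_eq:
  assumes "b \<in> carrier F" "b \<noteq> \<zero>"
  shows "char_sum F n (zero_set F phi p) b = signed_char_sum F n phi b p / 2"
proof -
  have "(\<Sum>y\<in>carrier F. trace_char F n (b \<otimes> y)) = 0"
    using sum_trace_char_mult[OF assms(1)] assms by (simp add: m_comm)
  then show ?thesis
    unfolding char_sum_def sum_zero_set_eq signed_char_sum_def
    by (simp add: add_divide_distrib distrib_right sum.distrib sum_divide_distrib[symmetric])
qed

lemma abs_sign_sum_le: "\<bar>sign_sum F phi p\<bar> \<le> 2 ^ n"
  using sum_abs[of "\<lambda>y. sign_at p (phi y)" "carrier F"] by (simp add: sign_sum_def card_carrier)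

lemma abs_signed_char_sum_le: "\<bar>signed_char_sum F n phi b p\<bar> \<le> 2 ^ n"
  using sum_abs[of "\<lambda>y. sign_at p (phi y) * trace_char F n (b \<otimes> y)" "carrier F"]
  by (simp add: signed_char_sum_def card_carrier abs_mult)

text \<open>If the zero set has at least a quarter of the points, the bound follows from
  \<open>char_sum_zero_set_eq\<close>; otherwise \<open>sign_sum\<close> is so negative that the right-hand side exceeds \<open>1\<close>.\<close>

lemma fourier_weight_le_sign_sums:
  assumes "b \<in> carrier F" "b \<noteq> \<zero>"
  shows "fourier_weight F n (zero_set F phi p) b
       \<le> ((signed_char_sum F n phi b p)\<^sup>2 + 4 * (sign_sum F phi p)\<^sup>2) / 4 ^ n"
proof -
  let ?Z = "zero_set F phi p" and ?G = "signed_char_sum F n phi b p" and ?H = "sign_sum F phi p"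
  let ?N = "(2::real) ^ n"
  have four_pow: "(4::real) ^ n = ?N * ?N"
    by (simp add: power_mult_distrib[symmetric])
  show ?thesis
  proof (cases "real (card ?Z) \<ge> ?N / 4")
    case True
    have "0 < real (card ?Z)"
      using True zero_less_power[of "2::real" n] by linarith
    have "fourier_weight F n ?Z b = ?G\<^sup>2 / 4 / (?N * real (card ?Z))"
      unfolding fourier_weight_def char_sum_zero_set_eq[OF assms] by (simp add: power_divide)
    also have "\<dots> \<le> ?G\<^sup>2 / 4 / (?N * (?N / 4))"
      using True \<open>0 < real (card ?Z)\<close> by (intro divide_left_mono mult_left_mono mult_pos_pos) auto
    also have "\<dots> = ?G\<^sup>2 / 4 ^ n"
      unfolding four_pow by simp
    also have "\<dots> \<le> (?G\<^sup>2 + 4 * ?H\<^sup>2) / 4 ^ n"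
      by (intro divide_right_mono) auto
    finally show ?thesis .
  next
    case False
    then have "?H < - ?N / 2"
      using card_zero_set_eq[of p] by simp
    then have "(?N / 2)\<^sup>2 \<le> (- ?H)\<^sup>2"
      by (intro power_mono) auto
    then have "?N * ?N \<le> 4 * ?H\<^sup>2"
      by (simp add: power2_eq_square)
    then have "?N * ?N \<le> ?G\<^sup>2 + 4 * ?H\<^sup>2"
      using zero_le_power2[of ?G] by linarith
    then have "1 \<le> (?G\<^sup>2 + 4 * ?H\<^sup>2) / 4 ^ n"
      unfolding four_pow by (simp add: le_divide_eq)
    then show ?thesis
      using fourier_weight_le_one[OF zero_set_subset] by (meson order_trans)
  qed
qed

lemma integrable_fourier_weight:
  "integrable (measure_pmf D) (\<lambda>p. fourier_weight F n (zero_set F phi p) b)"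
  by (rule integrable_measure_pmf_bounded[where B = 1])
     (simp add: fourier_weight_nonneg fourier_weight_le_one[OF zero_set_subset])

lemma integrable_tilt_nonzero:
  "x \<ge> 1 \<Longrightarrow> integrable (measure_pmf D) (\<lambda>p. tilt_nonzero F n x (zero_set F phi p))"
  by (rule integrable_measure_pmf_bounded[where B = x])
     (use tilt_nonzero_nonneg tilt_nonzero_le_self[OF zero_set_subset] in \<open>simp add: abs_le_iff\<close>)

lemma integrable_tilt_match:
  "b \<in> carrier F \<Longrightarrow> integrable (measure_pmf D) (\<lambda>p. tilt_match F n b (zero_set F phi p))"
  by (rule integrable_measure_pmf_bounded[where B = "2 ^ n"])
     (simp add: tilt_match_nonneg tilt_match_le_card[OF zero_set_subset])

lemma phi_inj: "inj_on phi (carrier F)" and phi_image: "phi ` carrier F \<subseteq> bitvecs n"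
  using phi_bij by (auto simp: bij_betw_def)

context
  fixes D :: "(bool list \<Rightarrow> bool) pmf"
  assumes pairwise: "two_wise_independent n D"
begin

lemma expectation_sign_sum: "measure_pmf.expectation D (sign_sum F phi) = 0"
proof -
  have "measure_pmf.expectation D (sign_sum F phi) = (\<Sum>y\<in>carrier F. measure_pmf.expectation D (\<lambda>p. sign_at p (phi y)))"
    unfolding sign_sum_def
    by (rule Bochner_Integration.integral_sum) (rule integrable_measure_pmf_bounded[where B = 1], simp)
  also have "\<dots> = 0"
    using phi_image by (intro sum.neutral ballI expectation_sign_at[OF pairwise degree_ge_one]) auto
  finally show ?thesis .
qed

lemma expectation_sign_sum_square: "measure_pmf.expectation D (\<lambda>p. (sign_sum F phi p)\<^sup>2) = 2 ^ n"
  using expectation_sum_sign_at_square[OF pairwise degree_ge_one finite_carrier phi_inj phi_image, where w = "\<lambda>_. 1"]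
  by (simp add: sign_sum_def card_carrier)

lemma expectation_signed_char_sum_square:
  "measure_pmf.expectation D (\<lambda>p. (signed_char_sum F n phi b p)\<^sup>2) = 2 ^ n"
  using expectation_sum_sign_at_square[OF pairwise degree_ge_one finite_carrier phi_inj phi_image,
      where w = "\<lambda>y. trace_char F n (b \<otimes> y)"]
  by (simp add: signed_char_sum_def card_carrier power2_eq_square trace_char_square)

lemma expectation_card_zero_set: "measure_pmf.expectation D (\<lambda>p. real (card (zero_set F phi p))) = 2 ^ n / 2"
proof -
  have "integrable (measure_pmf D) (sign_sum F phi)"
    using abs_sign_sum_le by (rule integrable_measure_pmf_bounded)
  then show ?thesis
    by (simp add: card_zero_set_eq add_divide_distrib expectation_sign_sum)
qed

lemma expectation_fourier_weight_le:
  assumes "b \<in> carrier F" "b \<noteq> \<zero>"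
  shows "measure_pmf.expectation D (\<lambda>p. fourier_weight F n (zero_set F phi p) b) \<le> 5 / 2 ^ n"
proof -
  have int_G: "integrable (measure_pmf D) (\<lambda>p. (signed_char_sum F n phi b p)\<^sup>2)"
    by (rule integrable_measure_pmf_bounded[where B = "2 ^ n * 2 ^ n"])
       (simp add: abs_le_square_iff[symmetric] abs_signed_char_sum_le power2_eq_square[symmetric])
  have int_H: "integrable (measure_pmf D) (\<lambda>p. (sign_sum F phi p)\<^sup>2)"
    by (rule integrable_measure_pmf_bounded[where B = "2 ^ n * 2 ^ n"])
       (simp add: abs_le_square_iff[symmetric] abs_sign_sum_le power2_eq_square[symmetric])
  note int_w = integrable_fourier_weight[of D b]
  have "measure_pmf.expectation D (\<lambda>p. fourier_weight F n (zero_set F phi p) b)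
      \<le> measure_pmf.expectation D (\<lambda>p. ((signed_char_sum F n phi b p)\<^sup>2 + 4 * (sign_sum F phi p)\<^sup>2) / 4 ^ n)"
    using int_G int_H fourier_weight_le_sign_sums[OF assms] by (intro integral_mono[OF int_w]) auto
  also have "\<dots> = 5 * 2 ^ n / 4 ^ n"
    using int_G int_H by (simp add: expectation_sign_sum_square expectation_signed_char_sum_square)
  also have "\<dots> = 5 / 2 ^ n"
    by (simp add: power_mult_distrib[symmetric] field_simps)
  finally show ?thesis .
qed

lemma expectation_tilt_nonzero_le:
  assumes "x \<ge> 1"
  shows "measure_pmf.expectation D (\<lambda>p. tilt_nonzero F n x (zero_set F phi p)) \<le> (1 + x) / 2"
proof -
  have int_card: "integrable (measure_pmf D) (\<lambda>p. real (card (zero_set F phi p)))"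
    by (rule integrable_measure_pmf_bounded[where B = "2 ^ n"])
       (simp add: card_carrier[symmetric] card_mono[OF finite_carrier zero_set_subset])
  have "measure_pmf.expectation D (\<lambda>p. tilt_nonzero F n x (zero_set F phi p))
      \<le> measure_pmf.expectation D (\<lambda>p. x - (x - 1) * (real (card (zero_set F phi p)) / 2 ^ n))"
    using int_card integrable_tilt_nonzero[OF assms] tilt_nonzero_le[OF zero_set_subset assms]
    by (intro integral_mono) auto
  also have "\<dots> = (1 + x) / 2"
    using int_card by (simp add: expectation_card_zero_set measure_pmf.prob_space field_simps)
  finally show ?thesis .
qed

lemma expectation_tilt_match_le:
  assumes b: "b \<in> carrier F"
  shows "measure_pmf.expectation D (\<lambda>p. tilt_match F n b (zero_set F phi p)) \<le> (if b = \<zero> then 2 ^ n else 6)"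
proof -
  note int_tilt = integrable_tilt_match[OF b, of D]
  show ?thesis
  proof (cases "b = \<zero>")
    case True
    have "measure_pmf.expectation D (\<lambda>p. tilt_match F n b (zero_set F phi p)) \<le> measure_pmf.expectation D (\<lambda>p. 2 ^ n)"
      using int_tilt tilt_match_le_card[OF zero_set_subset b] by (intro integral_mono) auto
    then show ?thesis
      using True by simp
  next
    case False
    note int_w = integrable_fourier_weight[of D b]
    have "measure_pmf.expectation D (\<lambda>p. tilt_match F n b (zero_set F phi p))
        \<le> measure_pmf.expectation D (\<lambda>p. 1 + (2 ^ n - 1) * fourier_weight F n (zero_set F phi p) b)"
      using int_tilt int_w tilt_match_le[OF zero_set_subset b] by (intro integral_mono) auto
    also have "\<dots> = 1 + (2 ^ n - 1) * measure_pmf.expectation D (\<lambda>p. fourier_weight F n (zero_set F phi p) b)"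
      using int_w by simp
    also have "\<dots> \<le> 1 + (2 ^ n - 1) * (5 / 2 ^ n)"
      using expectation_fourier_weight_le[OF b False] by (intro add_left_mono mult_left_mono) auto
    also have "\<dots> \<le> 6"
      by (simp add: field_simps)
    finally show ?thesis
      using False by simp
  qed
qed

end

end

context binary_field_with_basis
begin

lemma integrable_prod_tilt_nonzero:
  fixes m :: nat
  shows "x \<ge> 1 \<Longrightarrow> integrable (measure_pmf (Pi_pmf {..<m} (\<lambda>_. False) D))
     (\<lambda>P. \<Prod>j<m. tilt_nonzero F n x (zero_set F phi (P j)))"
  by (intro integrable_prod_Pi_pmf integrable_tilt_nonzero) auto

lemma integrable_prod_tilt_match:
  "c \<in> fvecs F m \<Longrightarrow> integrable (measure_pmf (Pi_pmf {..<m} (\<lambda>_. False) D))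
     (\<lambda>P. \<Prod>j<m. tilt_match F n (c j) (zero_set F phi (P j)))"
  by (intro integrable_prod_Pi_pmf integrable_tilt_match) (auto simp: fvecs_closed)

lemma integrable_bad_weight_bound:
  assumes "gamma \<in> {..<m} \<rightarrow> carrier F" "inj_on gamma {..<m}" "x \<ge> 1"
  shows "integrable (measure_pmf (Pi_pmf {..<m} (\<lambda>_. False) D)) (bad_weight_bound F n phi m gamma \<alpha> \<epsilon> x)"
  unfolding bad_weight_bound_def
  using assms integrable_prod_tilt_nonzero RS_code_subset_fvecs[OF assms(1,2), of "(1 - \<alpha>) * real m"]
  by (intro Bochner_Integration.integrable_add Bochner_Integration.integrable_sum integrable_mult_right
        integrable_prod_tilt_match) auto

context
  fixes m :: nat and D :: "nat \<Rightarrow> (bool list \<Rightarrow> bool) pmf"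
  assumes pairwise: "\<And>j. j < m \<Longrightarrow> two_wise_independent n (D j)"
begin

lemma expectation_prod_tilt_nonzero_le:
  assumes "x \<ge> 1"
  shows "measure_pmf.expectation (Pi_pmf {..<m} (\<lambda>_. False) D)
           (\<lambda>P. \<Prod>j<m. tilt_nonzero F n x (zero_set F phi (P j))) \<le> ((1 + x) / 2) ^ m"
proof -
  have "measure_pmf.expectation (Pi_pmf {..<m} (\<lambda>_. False) D)
          (\<lambda>P. \<Prod>j<m. tilt_nonzero F n x (zero_set F phi (P j)))
      = (\<Prod>j<m. measure_pmf.expectation (D j) (\<lambda>p. tilt_nonzero F n x (zero_set F phi p)))"
    using assms by (intro expectation_prod_Pi_pmf integrable_tilt_nonzero tilt_nonzero_nonneg) auto
  also have "\<dots> \<le> (\<Prod>j<m. (1 + x) / 2)"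
    using assms expectation_tilt_nonzero_le[OF pairwise]
    by (intro prod_mono conjI Bochner_Integration.integral_nonneg tilt_nonzero_nonneg) auto
  finally show ?thesis
    by simp
qed

lemma expectation_prod_tilt_match_le:
  assumes gamma: "gamma \<in> {..<m} \<rightarrow> carrier F" "inj_on gamma {..<m}"
    and c: "c \<in> RS_code F m gamma k - {vzero F m}"
  shows "measure_pmf.expectation (Pi_pmf {..<m} (\<lambda>_. False) D)
           (\<lambda>P. \<Prod>j<m. tilt_match F n (c j) (zero_set F phi (P j)))
         \<le> (2 ^ n) ^ (nat \<lceil>k\<rceil> - 1) * 6 ^ m"
proof -
  let ?zeros = "{j\<in>{..<m}. c j = \<zero>}"
  have c_vec: "c \<in> fvecs F m"
    using c RS_code_subset_fvecs[OF gamma] by auto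
  have "measure_pmf.expectation (Pi_pmf {..<m} (\<lambda>_. False) D)
          (\<lambda>P. \<Prod>j<m. tilt_match F n (c j) (zero_set F phi (P j)))
      = (\<Prod>j<m. measure_pmf.expectation (D j) (\<lambda>p. tilt_match F n (c j) (zero_set F phi p)))"
    by (intro expectation_prod_Pi_pmf integrable_tilt_match tilt_match_nonneg)
       (auto simp: fvecs_closed[OF c_vec])
  also have "\<dots> \<le> (\<Prod>j<m. if c j = \<zero> then 2 ^ n else 6)"
    using expectation_tilt_match_le[OF pairwise fvecs_closed[OF c_vec]]
    by (intro prod_mono conjI Bochner_Integration.integral_nonneg tilt_match_nonneg) auto
  also have "\<dots> = (2 ^ n) ^ card ?zeros * 6 ^ card {j\<in>{..<m}. c j \<noteq> \<zero>}"
    by (simp add: prod.If_cases Int_def)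
  also have "\<dots> \<le> (2 ^ n) ^ (nat \<lceil>k\<rceil> - 1) * 6 ^ m"
  proof (intro mult_mono power_increasing)
    show "card ?zeros \<le> nat \<lceil>k\<rceil> - 1"
      using card_zeros_RS_code_less[OF gamma] c by fastforce
    show "card {j\<in>{..<m}. c j \<noteq> \<zero>} \<le> m"
      using card_mono[of "{..<m}" "{j\<in>{..<m}. c j \<noteq> \<zero>}"] by auto
  qed auto
  finally show ?thesis .
qed

context
  fixes gamma :: "nat \<Rightarrow> 'a"
  assumes gamma: "gamma \<in> {..<m} \<rightarrow> carrier F" "inj_on gamma {..<m}"
begin

lemma expectation_bad_weight_bound_le:
  assumes "x \<ge> 1"
  shows "measure_pmf.expectation (Pi_pmf {..<m} (\<lambda>_. False) D) (bad_weight_bound F n phi m gamma \<alpha> \<epsilon> x)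
    \<le> x powr (- ((1/2 + \<epsilon>) * real m)) * ((1 + x) / 2) ^ m
      + real (card (RS_code F m gamma ((1 - \<alpha>) * real m)))
        * ((2 ^ n) powr (- (real m - (1/2 + \<epsilon>) * real m)) * ((2 ^ n) ^ (nat \<lceil>(1 - \<alpha>) * real m\<rceil> - 1) * 6 ^ m))"
    (is "_ \<le> ?A * ?a + real (card ?C) * (?B * ?b)")
proof -
  let ?M = "Pi_pmf {..<m} (\<lambda>_. False) D"
  let ?nonzero = "\<lambda>P. \<Prod>j<m. tilt_nonzero F n x (zero_set F phi (P j))"
  let ?match = "\<lambda>c P. \<Prod>j<m. tilt_match F n (c j) (zero_set F phi (P j))"
  have match_vec: "c \<in> fvecs F m" if "c \<in> ?C - {vzero F m}" for c
    using that RS_code_subset_fvecs[OF gamma] by auto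
  have "measure_pmf.expectation ?M (bad_weight_bound F n phi m gamma \<alpha> \<epsilon> x)
      = ?A * measure_pmf.expectation ?M ?nonzero
        + (\<Sum>c\<in>?C - {vzero F m}. ?B * measure_pmf.expectation ?M (?match c))"
  proof -
    have "integrable ?M (\<lambda>P. \<Sum>c\<in>?C - {vzero F m}. ?B * ?match c P)"
      using integrable_prod_tilt_match[OF match_vec]
      by (intro Bochner_Integration.integrable_sum integrable_mult_right) auto
    moreover have "integrable ?M (\<lambda>P. ?A * ?nonzero P)"
      using integrable_prod_tilt_nonzero[OF assms] by (rule integrable_mult_right)
    ultimately show ?thesis
      unfolding bad_weight_bound_def
      using integrable_prod_tilt_match[OF match_vec]
      by (simp add: Bochner_Integration.integral_add Bochner_Integration.integral_sum)
  qed
  also have "\<dots> \<le> ?A * ?a + (\<Sum>c\<in>?C - {vzero F m}. ?B * ?b)"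
    using expectation_prod_tilt_nonzero_le[OF assms] expectation_prod_tilt_match_le[OF gamma]
    by (intro add_mono sum_mono mult_left_mono) auto
  also have "(\<Sum>c\<in>?C - {vzero F m}. ?B * ?b) \<le> real (card ?C) * (?B * ?b)"
    using finite_RS_code[OF gamma] card_Diff1_le[of ?C "vzero F m"] by (simp add: mult_right_mono)
  finally show ?thesis
    by simp
qed

end

end

end

section \<open>Numerical estimates\<close>

lemma tolerance_le_GS_radius:
  assumes "7/8 + 3/4 * \<epsilon> < \<alpha>" "\<alpha> < 1"
  shows "(1/2 + \<epsilon>) * real m \<le> real m - sqrt ((1 - \<alpha>) * real m * real m)"
proof -
  have "0 \<le> (\<epsilon> - 1/8)\<^sup>2"
    by simp
  then have "1 - \<alpha> \<le> (1/2 - \<epsilon>)\<^sup>2"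
    using assms by (simp add: power2_eq_square algebra_simps)
  then have "sqrt (1 - \<alpha>) \<le> 1/2 - \<epsilon>"
    using assms real_sqrt_le_mono by fastforce
  moreover have "sqrt ((1 - \<alpha>) * real m * real m) = sqrt (1 - \<alpha>) * real m"
    by (simp add: real_sqrt_mult mult.assoc)
  ultimately have "sqrt ((1 - \<alpha>) * real m * real m) \<le> (1/2 - \<epsilon>) * real m"
    by (simp add: mult_right_mono)
  then show ?thesis
    by (simp add: algebra_simps)
qed

text \<open>The base of the first term of the bound on the expected bad weight, for the tilt
  \<open>x = (1 + 2 \<epsilon>)\<^sup>2\<close>.\<close>

definition decay_rate :: "real \<Rightarrow> real" where
  "decay_rate \<epsilon> = ((1 + (1 + 2 * \<epsilon>)\<^sup>2) / 2) / ((1 + 2 * \<epsilon>)\<^sup>2) powr (1/2 + \<epsilon>)"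

lemma decay_rate_pos: "\<epsilon> > 0 \<Longrightarrow> decay_rate \<epsilon> > 0"
  by (simp add: decay_rate_def add_pos_pos)

lemma decay_rate_less_one:
  assumes "\<epsilon> > 0"
  shows "decay_rate \<epsilon> < 1"
proof -
  define z where "z = 1 + 2 * \<epsilon>"
  have z: "z > 1"
    using assms by (simp add: z_def)
  have "z + 4 * \<epsilon>\<^sup>2 = z * (1 + 2 * \<epsilon> * (1 - 1 / z))"
    using z by (simp add: z_def field_simps power2_eq_square)
  also have "\<dots> \<le> z * exp (2 * \<epsilon> * ln z)"
  proof (rule mult_left_mono)
    have "1 - 1 / z \<le> ln z"
      using ln_le_minus_one[of "1 / z"] z by (simp add: ln_div)
    then have "1 + 2 * \<epsilon> * (1 - 1 / z) \<le> 1 + 2 * \<epsilon> * ln z"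
      using assms by simp
    also have "\<dots> \<le> exp (2 * \<epsilon> * ln z)"
      by (rule exp_ge_add_one_self)
    finally show "1 + 2 * \<epsilon> * (1 - 1 / z) \<le> exp (2 * \<epsilon> * ln z)" .
  qed (use z in simp)
  also have "\<dots> = (z\<^sup>2) powr (1/2 + \<epsilon>)"
  proof -
    have "(1/2 + \<epsilon>) * ln (z\<^sup>2) = ln z + 2 * \<epsilon> * ln z"
      using z by (simp add: ln_realpow algebra_simps)
    then show ?thesis
      using z by (simp add: powr_def exp_add)
  qed
  finally have denominator: "z + 4 * \<epsilon>\<^sup>2 \<le> (z\<^sup>2) powr (1/2 + \<epsilon>)" .
  have numerator: "(1 + z\<^sup>2) / 2 = z + 2 * \<epsilon>\<^sup>2"
    by (simp add: z_def power2_eq_square field_simps)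
  have "decay_rate \<epsilon> = (z + 2 * \<epsilon>\<^sup>2) / (z\<^sup>2) powr (1/2 + \<epsilon>)"
    unfolding decay_rate_def z_def[symmetric] numerator ..
  moreover have "z + 2 * \<epsilon>\<^sup>2 < (z\<^sup>2) powr (1/2 + \<epsilon>)"
    using denominator assms by (smt (verit) zero_less_power2)
  ultimately show ?thesis
    using z by (simp add: divide_less_eq_1)
qed

lemma decay_rate_power:
  assumes "\<epsilon> > 0"
  shows "((1 + 2 * \<epsilon>)\<^sup>2) powr (- ((1/2 + \<epsilon>) * real m)) * ((1 + (1 + 2 * \<epsilon>)\<^sup>2) / 2) ^ m = decay_rate \<epsilon> ^ m"
proof -
  have exponent: "- ((1/2 + \<epsilon>) * real m) = real m * (- (1/2 + \<epsilon>))"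
    by (metis mult.commute mult_minus_right)
  have "(1 + 2 * \<epsilon>)\<^sup>2 \<noteq> 0"
    using assms by simp
  from powr_power[OF this, of "- (1/2 + \<epsilon>)" m]
  have "((1 + 2 * \<epsilon>)\<^sup>2) powr (- ((1/2 + \<epsilon>) * real m)) = (((1 + 2 * \<epsilon>)\<^sup>2) powr (- (1/2 + \<epsilon>))) ^ m"
    unfolding exponent by simp
  moreover have "((1 + 2 * \<epsilon>)\<^sup>2) powr (- (1/2 + \<epsilon>)) * ((1 + (1 + 2 * \<epsilon>)\<^sup>2) / 2) = decay_rate \<epsilon>"
    by (subst powr_minus_divide) (simp add: decay_rate_def)
  ultimately show ?thesis
    by (metis power_mult_distrib)
qed

lemma code_term_exponent_le:
  assumes "0 \<le> \<epsilon>" "7/8 + 3/4 * \<epsilon> < \<alpha>" "\<alpha> < 1" "m \<ge> 8"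
  shows "2 * real (nat \<lceil>(1 - \<alpha>) * real m\<rceil>) - 1 - real m + (1/2 + \<epsilon>) * real m \<le> - (real m / 8)"
proof -
  have "(1 - \<alpha>) * real m > 0"
    using assms(3,4) by simp
  then have "real (nat \<lceil>(1 - \<alpha>) * real m\<rceil>) \<le> (1 - \<alpha>) * real m + 1"
    by linarith
  moreover have "real m * (2 * (1 - \<alpha>) - 1 + (1/2 + \<epsilon>)) \<le> real m * (- 1/4)"
    using assms(1,2) by (intro mult_left_mono) auto
  ultimately show ?thesis
    using assms(4) by (simp add: algebra_simps)
qed

text \<open>The second term of the bound on the expected bad weight: the number of codewords
  times the largest term of the union bound over them.\<close>

lemma code_term_le:
  assumes "0 \<le> \<epsilon>" "7/8 + 3/4 * \<epsilon> < \<alpha>" "\<alpha> < 1" "n \<ge> 32" "m \<ge> 8"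
    and card: "N \<le> (2 ^ n) ^ nat \<lceil>(1 - \<alpha>) * real m\<rceil>"
  shows "N * ((2 ^ n) powr (- (real m - (1/2 + \<epsilon>) * real m)) * ((2 ^ n) ^ (nat \<lceil>(1 - \<alpha>) * real m\<rceil> - 1) * 6 ^ m))
    \<le> (1/2 :: real) ^ m"
proof -
  let ?d = "nat \<lceil>(1 - \<alpha>) * real m\<rceil>"
  let ?t = "(1/2 + \<epsilon>) * real m"
  have "(1 - \<alpha>) * real m > 0"
    using assms(3,5) by simp
  then have "?d \<ge> 1"
    by linarith
  then have powers: "((2::real) ^ n) ^ ?d * (2 ^ n) powr (- (real m - ?t)) * (2 ^ n) ^ (?d - 1)
      = 2 powr (real n * (2 * real ?d - 1 - real m + ?t))"
    by (simp add: powr_realpow[symmetric] powr_powr powr_add[symmetric] of_nat_diff algebra_simps)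
  have "N * ((2 ^ n) powr (- (real m - ?t)) * ((2 ^ n) ^ (?d - 1) * 6 ^ m))
      \<le> (2 ^ n) ^ ?d * (2 ^ n) powr (- (real m - ?t)) * (2 ^ n) ^ (?d - 1) * 6 ^ m"
    using card by (simp add: mult_right_mono mult_ac)
  also have "\<dots> \<le> 2 powr (real m * (- (real n / 8))) * 6 ^ m"
  proof -
    have "real n * (2 * real ?d - 1 - real m + ?t) \<le> real n * (- (real m / 8))"
      using code_term_exponent_le[OF assms(1-3,5)] by (intro mult_left_mono) auto
    also have "\<dots> = real m * (- (real n / 8))"
      by simp
    finally show ?thesis
      unfolding powers by (intro mult_right_mono powr_mono) auto
  qed
  also have "\<dots> = (2 powr (- (real n / 8)) * 6) ^ m"
    by (simp add: powr_power power_mult_distrib)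
  also have "\<dots> \<le> (1/2) ^ m"
  proof (rule power_mono)
    have "2 powr (- (real n / 8)) \<le> 2 powr (-4 :: real)"
      using assms(4) by (intro powr_mono) auto
    then show "2 powr (- (real n / 8)) * 6 \<le> 1/2"
      by (simp add: powr_minus_divide)
  qed simp
  finally show ?thesis .
qed

definition failure_base :: "real \<Rightarrow> real" where
  "failure_base \<epsilon> = sqrt (max (decay_rate \<epsilon>) (1/2))"

lemma failure_base_pos: "\<epsilon> > 0 \<Longrightarrow> failure_base \<epsilon> > 0"
  by (simp add: failure_base_def max_def)

lemma failure_base_less_one: "\<epsilon> > 0 \<Longrightarrow> failure_base \<epsilon> < 1"
  using decay_rate_less_one by (simp add: failure_base_def max_def)

lemma decay_rate_plus_half_le:
  assumes "\<epsilon> > 0"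
  shows "decay_rate \<epsilon> ^ m + (1/2) ^ m \<le> 2 * failure_base \<epsilon> ^ (2 * m)"
proof -
  have "decay_rate \<epsilon> ^ m + (1/2) ^ m \<le> max (decay_rate \<epsilon>) (1/2) ^ m + max (decay_rate \<epsilon>) (1/2) ^ m"
    using decay_rate_pos[OF assms] by (intro add_mono power_mono) auto
  also have "\<dots> = 2 * failure_base \<epsilon> ^ (2 * m)"
    using decay_rate_pos[OF assms] by (simp add: failure_base_def power_mult max_def)
  finally show ?thesis .
qed

section \<open>The bad weight is small with high probability\<close>

lemma prob_less_ge_one_minus_expectation_div:
  fixes f :: "'a \<Rightarrow> real"
  assumes "integrable (measure_pmf M) f" "\<And>x. f x \<ge> 0" "c > 0"
  shows "1 - measure_pmf.expectation M f / c \<le> measure_pmf.prob M {x. f x < c}"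
proof -
  have "measure_pmf.prob M {x. f x \<ge> c} \<le> measure_pmf.expectation M f / c"
    using integral_Markov_inequality_measure[OF assms(1), of UNIV c] assms(2,3) by simp
  moreover have "{x. f x < c} = - {x. f x \<ge> c}"
    by auto
  then have "measure_pmf.prob M {x. f x < c} = 1 - measure_pmf.prob M {x. f x \<ge> c}"
    using measure_pmf.prob_compl[of "{x. f x \<ge> c}" M] by (simp add: Compl_eq_Diff_UNIV)
  ultimately show ?thesis
    by simp
qed

lemma (in binary_field) bad_weight_bound_nonneg:
  "x \<ge> 1 \<Longrightarrow> bad_weight_bound F n phi m gamma \<alpha> \<epsilon> x P \<ge> 0"
  unfolding bad_weight_bound_def
  by (intro add_nonneg_nonneg mult_nonneg_nonneg prod_nonneg sum_nonneg tilt_nonzero_nonneg tilt_match_nonneg) auto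

lemma (in binary_field_with_basis) expectation_bad_weight_bound_le_failure_base:
  assumes n: "n \<ge> 32" and m: "m \<ge> 8"
    and gamma: "gamma \<in> {..<m} \<rightarrow> carrier F" "inj_on gamma {..<m}"
    and pairwise: "\<And>j. j < m \<Longrightarrow> two_wise_independent n (D j)"
    and \<epsilon>: "0 < \<epsilon>" and \<alpha>: "7/8 + 3/4 * \<epsilon> < \<alpha>" "\<alpha> < 1"
  shows "measure_pmf.expectation (Pi_pmf {..<m} (\<lambda>_. False) D)
      (bad_weight_bound F n phi m gamma \<alpha> \<epsilon> ((1 + 2 * \<epsilon>)\<^sup>2)) \<le> 2 * failure_base \<epsilon> ^ (2 * m)"
proof -
  have "real (card (RS_code F m gamma ((1 - \<alpha>) * real m))) \<le> (2 ^ n) ^ nat \<lceil>(1 - \<alpha>) * real m\<rceil>"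
    using card_RS_code_le[OF gamma] by (metis of_nat_le_iff of_nat_numeral of_nat_power)
  then have "measure_pmf.expectation (Pi_pmf {..<m} (\<lambda>_. False) D)
      (bad_weight_bound F n phi m gamma \<alpha> \<epsilon> ((1 + 2 * \<epsilon>)\<^sup>2)) \<le> decay_rate \<epsilon> ^ m + (1/2) ^ m"
    using expectation_bad_weight_bound_le[where D = D and \<alpha> = \<alpha> and \<epsilon> = \<epsilon>, OF pairwise gamma,
        of "(1 + 2 * \<epsilon>)\<^sup>2"] decay_rate_power[OF \<epsilon>, of m] code_term_le[OF _ \<alpha> n m] \<epsilon>
    by fastforce
  also have "\<dots> \<le> 2 * failure_base \<epsilon> ^ (2 * m)"
    by (rule decay_rate_plus_half_le[OF \<epsilon>])
  finally show ?thesis .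
qed

lemma (in binary_field_with_basis) bad_weight_small_with_high_probability:
  assumes n: "n \<ge> 32" and m: "m \<ge> 8"
    and gamma: "gamma \<in> {..<m} \<rightarrow> carrier F" "inj_on gamma {..<m}"
    and pairwise: "\<And>j. j < m \<Longrightarrow> two_wise_independent n (D j)"
    and \<epsilon>: "0 < \<epsilon>" and \<alpha>: "7/8 + 3/4 * \<epsilon> < \<alpha>" "\<alpha> < 1"
  shows "1 - failure_base \<epsilon> ^ m \<le> measure_pmf.prob (Pi_pmf {..<m} (\<lambda>_. False) D)
    {P. (\<Sum>(x, e)\<in>BAD F m gamma \<alpha> \<epsilon>. \<bar>Vhat F m gamma \<alpha> x * What F n m phi P e\<bar>\<^sup>2)
          = (\<Sum>e\<in>bad_errors F m gamma \<alpha> \<epsilon>. \<bar>What F n m phi P e\<bar>\<^sup>2)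
        \<and> (\<Sum>e\<in>bad_errors F m gamma \<alpha> \<epsilon>. \<bar>What F n m phi P e\<bar>\<^sup>2) \<le> 2 * failure_base \<epsilon> ^ m}"
proof -
  define x :: real where "x = (1 + 2 * \<epsilon>)\<^sup>2"
  define Q where "Q = bad_weight_bound F n phi m gamma \<alpha> \<epsilon> x"
  let ?M = "Pi_pmf {..<m} (\<lambda>_. False) D"
  let ?\<tau> = "failure_base \<epsilon>"
  have x: "x > 1"
    using \<epsilon> by (simp add: x_def)
  have expectation: "measure_pmf.expectation ?M Q \<le> 2 * ?\<tau> ^ (2 * m)"
    unfolding Q_def x_def by (rule expectation_bad_weight_bound_le_failure_base[OF assms])
  have "1 - measure_pmf.expectation ?M Q / (2 * ?\<tau> ^ m) \<le> measure_pmf.prob ?M {P. Q P < 2 * ?\<tau> ^ m}"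
    using failure_base_pos[OF \<epsilon>] integrable_bad_weight_bound[OF gamma, where D = D and \<alpha> = \<alpha> and \<epsilon> = \<epsilon> and x = x] x
    by (intro prob_less_ge_one_minus_expectation_div) (auto simp: Q_def bad_weight_bound_nonneg)
  moreover have "measure_pmf.expectation ?M Q / (2 * ?\<tau> ^ m) \<le> ?\<tau> ^ m"
    using expectation failure_base_pos[OF \<epsilon>] by (simp add: divide_le_eq power_mult power2_eq_square mult_ac)
  moreover have "{P. Q P < 2 * ?\<tau> ^ m}
      \<subseteq> {P. (\<Sum>(x, e)\<in>BAD F m gamma \<alpha> \<epsilon>. \<bar>Vhat F m gamma \<alpha> x * What F n m phi P e\<bar>\<^sup>2)
              = (\<Sum>e\<in>bad_errors F m gamma \<alpha> \<epsilon>. \<bar>What F n m phi P e\<bar>\<^sup>2)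
            \<and> (\<Sum>e\<in>bad_errors F m gamma \<alpha> \<epsilon>. \<bar>What F n m phi P e\<bar>\<^sup>2) \<le> 2 * ?\<tau> ^ m}"
    (is "_ \<subseteq> ?good")
  proof (intro subsetI CollectI conjI)
    fix P
    assume "P \<in> {P. Q P < 2 * ?\<tau> ^ m}"
    moreover have "(\<Sum>e\<in>bad_errors F m gamma \<alpha> \<epsilon>. \<bar>What F n m phi P e\<bar>\<^sup>2) \<le> Q P"
      unfolding Q_def by (rule sum_bad_What_square_le[OF gamma tolerance_le_GS_radius[OF \<alpha>] x])
    ultimately show "(\<Sum>e\<in>bad_errors F m gamma \<alpha> \<epsilon>. \<bar>What F n m phi P e\<bar>\<^sup>2) \<le> 2 * ?\<tau> ^ m"
      by simp
    show "(\<Sum>(x, e)\<in>BAD F m gamma \<alpha> \<epsilon>. \<bar>Vhat F m gamma \<alpha> x * What F n m phi P e\<bar>\<^sup>2)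
        = (\<Sum>e\<in>bad_errors F m gamma \<alpha> \<epsilon>. \<bar>What F n m phi P e\<bar>\<^sup>2)"
      by (rule sum_BAD_eq_sum_bad_errors[OF gamma])
  qed
  then have "measure_pmf.prob ?M {P. Q P < 2 * ?\<tau> ^ m} \<le> measure_pmf.prob ?M ?good"
    by (rule measure_pmf.finite_measure_mono) simp
  ultimately show ?thesis
    by linarith
qed

section \<open>Asymptotics\<close>

lemma linear_lower_bound_of_Theta:
  assumes "(\<lambda>l. real (n l)) \<in> \<Theta>(\<lambda>l. real l)"
  obtains c where "c > 0" "\<forall>\<^sub>F l in sequentially. real (n l) \<ge> c * real l"
proof -
  have "(\<lambda>l. real (n l)) \<in> \<Omega>(\<lambda>l. real l)"
    using assms by (rule bigthetaD2)
  then show ?thesis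
    using that by (elim landau_omega.bigE) auto
qed

lemma eventually_real_ge: "\<forall>\<^sub>F l in sequentially. real l \<ge> r"
  using filterlim_real_sequentially by (simp add: filterlim_at_top)

lemma eventually_ge_of_linear_lower_bound:
  assumes "c > 0" "\<forall>\<^sub>F l in sequentially. real (n l) \<ge> c * real l"
  shows "\<forall>\<^sub>F l in sequentially. n l \<ge> N"
  using eventually_real_ge[of "real N / c"] assms(2)
proof eventually_elim
  case (elim l)
  then have "c * real l \<ge> real N"
    using assms(1) by (simp add: field_simps)
  then show ?case
    using elim by linarith
qed

lemma eventually_ge_mult_ln_of_omega:
  assumes "(\<lambda>l. real (m l)) \<in> \<omega>(\<lambda>l. ln (real (n l)))"
    and "\<forall>\<^sub>F l in sequentially. n l \<ge> 1"
  shows "\<forall>\<^sub>F l in sequentially. real (m l) \<ge> K * ln (real (n l))"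
  using smallomegaD[OF assms(1), of K] assms(2) by eventually_elim auto

lemma power_le_inverse_power:
  assumes t: "0 < t" "t < (1::real)" and "N \<ge> 1"
    and "real m \<ge> (real c + 1) / (- ln t) * ln (real N)"
  shows "t ^ m \<le> inverse (real N ^ (c + 1))"
proof -
  have ln_t: "ln t < 0"
    using t by simp
  have "t ^ m = exp (real m * ln t)"
    using t by (simp add: exp_of_nat_mult)
  also have "real m * ln t \<le> (real c + 1) / (- ln t) * ln (real N) * ln t"
    using assms(4) ln_t by (intro mult_right_mono_neg) auto
  also have "\<dots> = - (real (c + 1) * ln (real N))"
    using ln_t by (simp add: field_simps)
  also have "exp \<dots> = inverse (exp (ln (real N)) ^ (c + 1))"
    by (simp only: exp_minus exp_of_nat_mult)
  also have "\<dots> = inverse (real N ^ (c + 1))"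
    using assms(3) by simp
  finally show ?thesis
    by simp
qed

lemma eventually_fibers_beyond:
  fixes n :: "nat \<Rightarrow> nat"
  shows "\<forall>\<^sub>F N in sequentially. \<forall>l. n l = N \<longrightarrow> l \<ge> L"
proof -
  have beyond: "\<forall>l. n l = N \<longrightarrow> l \<ge> L" if "N > Max (n ` {..<L})" for N
    using that Max_ge[of "n ` {..<L}"] by (metis finite_imageI finite_lessThan imageI lessThan_iff not_le not_less)
  show ?thesis
    by (rule eventually_mono[OF eventually_gt_at_top[of "Max (n ` {..<L})"]]) (use beyond in blast)
qed

lemma negligible_Sup_power:
  assumes t: "0 < t" "t < (1::real)"
    and n_pos: "\<forall>\<^sub>F l in sequentially. n l \<ge> 1"
    and m_large: "\<And>K. \<forall>\<^sub>F l in sequentially. real (m l) \<ge> K * ln (real (n l))"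
  shows "negligible_fun (\<lambda>N. Sup (insert 0 ((\<lambda>l. t ^ m l) ` {l. n l = N})))"
  unfolding negligible_fun_def
proof
  fix c :: nat
  have "\<forall>\<^sub>F l in sequentially. real (m l) \<ge> (real c + 1) / (- ln t) * ln (real (n l)) \<and> n l \<ge> 1"
    using m_large n_pos by (rule eventually_conj)
  then obtain L where "\<And>l. l \<ge> L \<Longrightarrow> real (m l) \<ge> (real c + 1) / (- ln t) * ln (real (n l)) \<and> n l \<ge> 1"
    by (auto simp: eventually_sequentially)
  then have L: "t ^ m l \<le> inverse (real (n l) ^ (c + 1))" if "l \<ge> L" for l
    using power_le_inverse_power[OF t, where N = "n l" and m = "m l" and c = c] that by auto
  show "\<forall>\<^sub>F N in sequentially. \<bar>Sup (insert 0 ((\<lambda>l. t ^ m l) ` {l. n l = N}))\<bar> < inverse (real N ^ c)"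
    using eventually_fibers_beyond[of n L] eventually_ge_at_top[of 2]
  proof eventually_elim
    case (elim N)
    have "Sup (insert 0 ((\<lambda>l. t ^ m l) ` {l. n l = N})) \<le> inverse (real N ^ (c + 1))"
      using elim L by (intro cSup_least) auto
    also have "\<dots> < inverse (real N ^ c)"
      using elim by (intro less_imp_inverse_less power_strict_increasing) auto
    finally have "Sup (insert 0 ((\<lambda>l. t ^ m l) ` {l. n l = N})) < inverse (real N ^ c)" .
    moreover have "0 \<le> Sup (insert 0 ((\<lambda>l. t ^ m l) ` {l. n l = N}))"
      using t by (intro cSup_upper bdd_aboveI[where M = 1]) (auto intro: power_le_one)
    ultimately show ?case
      by simp
  qed
qed

lemma negligible_double_comp_linear:
  assumes \<nu>: "negligible_fun \<nu>"
    and c: "c > 0" "\<forall>\<^sub>F l in sequentially. real (n l) \<ge> c * real l"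
  shows "negligible_fun (\<lambda>l. 2 * \<nu> (n l))"
  unfolding negligible_fun_def
proof
  fix k :: nat
  obtain N where N: "\<And>N'. N' \<ge> N \<Longrightarrow> \<bar>\<nu> N'\<bar> < inverse (real N' ^ (k + 1))"
    using \<nu> unfolding negligible_fun_def eventually_sequentially by blast
  show "\<forall>\<^sub>F l in sequentially. \<bar>2 * \<nu> (n l)\<bar> < inverse (real l ^ k)"
    using eventually_ge_of_linear_lower_bound[OF c, of N] c(2) eventually_real_ge[of "2 / c ^ (k + 1)"]
      eventually_real_ge[of 1]
  proof eventually_elim
    case (elim l)
    have l: "real l > 0"
      using elim by linarith
    have "\<bar>2 * \<nu> (n l)\<bar> < 2 * inverse (real (n l) ^ (k + 1))"
      using N[of "n l"] elim by simp
    also have "\<dots> \<le> 2 * inverse ((c * real l) ^ (k + 1))"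
      using elim c(1) l by (intro mult_left_mono le_imp_inverse_le power_mono) auto
    also have "\<dots> = 2 / (c ^ (k + 1) * real l) * inverse (real l ^ k)"
      using l c(1) by (simp add: power_mult_distrib field_simps)
    also have "\<dots> \<le> inverse (real l ^ k)"
      using elim l c(1) by (simp add: field_simps)
    finally show ?case .
  qed
qed

text \<open>A failure probability \<open>\<tau> ^ m l\<close> with \<open>m l = \<omega>(log (n l))\<close> is negligible in \<open>n l\<close>;
  the supremum over all \<open>l\<close> with the same \<open>n l\<close> turns it into a function of \<open>n l\<close> alone.\<close>

lemma exists_negligible_bounds:
  fixes n m :: "nat \<Rightarrow> nat" and M :: "nat \<Rightarrow> 'p pmf" and E :: "nat \<Rightarrow> 'p \<Rightarrow> bool" and S :: "nat \<Rightarrow> 'p \<Rightarrow> real"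
  assumes n_Theta: "(\<lambda>l. real (n l)) \<in> \<Theta>(\<lambda>l. real l)"
    and m_omega: "(\<lambda>l. real (m l)) \<in> \<omega>(\<lambda>l. ln (real (n l)))"
    and \<tau>: "0 < \<tau>" "\<tau> < 1"
    and bound: "\<forall>\<^sub>F l in sequentially. 1 - \<tau> ^ m l \<le> measure_pmf.prob (M l) {P. E l P \<and> S l P \<le> 2 * \<tau> ^ m l}"
  shows "\<exists>\<mu> \<nu>. negligible_fun \<mu> \<and> negligible_fun \<nu> \<and>
    (\<forall>\<^sub>F l in sequentially. measure_pmf.prob (M l) {P. E l P \<and> S l P \<le> \<mu> l} \<ge> 1 - \<nu> (n l))"
proof -
  obtain c where c: "c > 0" "\<forall>\<^sub>F l in sequentially. real (n l) \<ge> c * real l"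
    using n_Theta by (rule linear_lower_bound_of_Theta)
  have n_large: "\<forall>\<^sub>F l in sequentially. n l \<ge> N" for N
    by (rule eventually_ge_of_linear_lower_bound[OF c])
  define \<nu> where "\<nu> N = Sup (insert 0 ((\<lambda>l. \<tau> ^ m l) ` {l. n l = N}))" for N
  define \<mu> where "\<mu> l = 2 * \<nu> (n l)" for l
  have "negligible_fun \<nu>"
    unfolding \<nu>_def using \<tau> n_large eventually_ge_mult_ln_of_omega[OF m_omega n_large]
    by (rule negligible_Sup_power)
  moreover have "negligible_fun \<mu>"
    unfolding \<mu>_def using \<open>negligible_fun \<nu>\<close> c by (rule negligible_double_comp_linear)
  moreover have power_le: "\<tau> ^ m l \<le> \<nu> (n l)" for l
    unfolding \<nu>_def using \<tau> by (intro cSup_upper bdd_aboveI[where M = 1]) (auto intro: power_le_one)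
  have "\<forall>\<^sub>F l in sequentially. measure_pmf.prob (M l) {P. E l P \<and> S l P \<le> \<mu> l} \<ge> 1 - \<nu> (n l)"
    using bound
  proof eventually_elim
    case (elim l)
    have "measure_pmf.prob (M l) {P. E l P \<and> S l P \<le> 2 * \<tau> ^ m l} \<le> measure_pmf.prob (M l) {P. E l P \<and> S l P \<le> \<mu> l}"
      using power_le[of l] by (intro measure_pmf.finite_measure_mono) (auto simp: \<mu>_def)
    then show ?case
      using elim power_le[of l] by linarith
  qed
  ultimately show ?thesis
    by blast
qed

lemma eventually_large_of_Theta_omega:
  fixes n m :: "nat \<Rightarrow> nat"
  assumes n_Theta: "(\<lambda>l. real (n l)) \<in> \<Theta>(\<lambda>l. real l)"
    and m_omega: "(\<lambda>l. real (m l)) \<in> \<omega>(\<lambda>l. ln (real (n l)))"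
  shows "\<forall>\<^sub>F l in sequentially. n l \<ge> N \<and> m l \<ge> K"
proof -
  obtain c where c: "c > 0" "\<forall>\<^sub>F l in sequentially. real (n l) \<ge> c * real l"
    using n_Theta by (rule linear_lower_bound_of_Theta)
  have n_large: "\<forall>\<^sub>F l in sequentially. n l \<ge> N" for N
    by (rule eventually_ge_of_linear_lower_bound[OF c])
  show ?thesis
    using n_large[of N] n_large[of 2] eventually_ge_mult_ln_of_omega[OF m_omega n_large, of "K / ln 2"]
  proof eventually_elim
    case (elim l)
    have "K / ln 2 * ln 2 \<le> K / ln 2 * ln (real (n l))"
      using elim by (intro mult_left_mono) auto
    then show ?case
      using elim by simp
  qed
qed

theorem mainTheorem2:
  fixes n m :: "nat \<Rightarrow> nat"
    and F :: "nat \<Rightarrow> ('a, 'b) ring_scheme"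
    and phi :: "nat \<Rightarrow> 'a \<Rightarrow> bool list"
    and gamma :: "nat \<Rightarrow> nat \<Rightarrow> 'a"
    and D :: "nat \<Rightarrow> nat \<Rightarrow> (bool list \<Rightarrow> bool) pmf"
    and \<epsilon> \<alpha> :: real
  assumes n_Theta: "(\<lambda>l. real (n l)) \<in> \<Theta>(\<lambda>l. real l)"
    and m_omega: "(\<lambda>l. real (m l)) \<in> \<omega>(\<lambda>l. ln (real (n l)))"
    and field: "\<forall>\<^sub>F l in sequentially. field_with_basis (F l) (n l) (phi l)"
    and points: "\<forall>\<^sub>F l in sequentially.
                   gamma l \<in> {..<m l} \<rightarrow> carrier (F l) \<and> inj_on (gamma l) {..<m l}"
    and distr: "\<forall>\<^sub>F l in sequentially. \<forall>i<m l.
                   shift_invariant (n l) (D l i) \<and> two_wise_independent (n l) (D l i)"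
    and eps: "0 < \<epsilon>" "\<epsilon> < 1/6"
    and alpha: "7/8 + 3/4 * \<epsilon> < \<alpha>" "\<alpha> < 1"
  shows "\<exists>\<mu> \<nu>. negligible_fun \<mu> \<and> negligible_fun \<nu> \<and>
    (\<forall>\<^sub>F l in sequentially.
       measure_pmf.prob (Pi_pmf {..<m l} (\<lambda>_. False) (D l))
         {P. (\<Sum>(x, e)\<in>BAD (F l) (m l) (gamma l) \<alpha> \<epsilon>.
                 \<bar>Vhat (F l) (m l) (gamma l) \<alpha> x * What (F l) (n l) (m l) (phi l) P e\<bar>\<^sup>2)
              = (\<Sum>e\<in>bad_errors (F l) (m l) (gamma l) \<alpha> \<epsilon>.
                   \<bar>What (F l) (n l) (m l) (phi l) P e\<bar>\<^sup>2)
           \<and> (\<Sum>e\<in>bad_errors (F l) (m l) (gamma l) \<alpha> \<epsilon>.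
                   \<bar>What (F l) (n l) (m l) (phi l) P e\<bar>\<^sup>2) \<le> \<mu> l}
       \<ge> 1 - \<nu> (n l))"
proof -
  have "\<forall>\<^sub>F l in sequentially. 1 - failure_base \<epsilon> ^ m l
      \<le> measure_pmf.prob (Pi_pmf {..<m l} (\<lambda>_. False) (D l))
         {P. (\<Sum>(x, e)\<in>BAD (F l) (m l) (gamma l) \<alpha> \<epsilon>.
                 \<bar>Vhat (F l) (m l) (gamma l) \<alpha> x * What (F l) (n l) (m l) (phi l) P e\<bar>\<^sup>2)
              = (\<Sum>e\<in>bad_errors (F l) (m l) (gamma l) \<alpha> \<epsilon>. \<bar>What (F l) (n l) (m l) (phi l) P e\<bar>\<^sup>2)
           \<and> (\<Sum>e\<in>bad_errors (F l) (m l) (gamma l) \<alpha> \<epsilon>. \<bar>What (F l) (n l) (m l) (phi l) P e\<bar>\<^sup>2)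
               \<le> 2 * failure_base \<epsilon> ^ m l}"
    using field points distr eventually_large_of_Theta_omega[OF n_Theta m_omega, of 32 8]
  proof eventually_elim
    case (elim l)
    interpret binary_field_with_basis "F l" "n l" "phi l"
      using elim by (blast intro: field_with_basis_imp_binary_field_with_basis)
    show ?case
      using elim eps(1) alpha by (intro bad_weight_small_with_high_probability) auto
  qed
  then show ?thesis
    using n_Theta m_omega failure_base_pos[OF eps(1)] failure_base_less_one[OF eps(1)]
    by (rule exists_negligible_bounds[rotated 4])
qed

end
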